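(* Let $\Omega\subset\mathbb{R}^n$ be a domain and $\mathcal{S}$ a basis of shapes in $\Omega$. If there exists $p_0\in[1,\infty)$ such that every $f\in\mathrm{BMO}^{p_0}_{\mathcal{S}}(\Omega)$ has the John–Nirenberg property with respect to $\mathcal{S}$, then $\mathrm{BMO}^{p_1}_{\mathcal{S}}(\Omega)\cong\mathrm{BMO}^{p_2}_{\mathcal{S}}(\Omega)$ for all $p_0\le p_1,p_2<\infty$.
   Context: A domain is an open connected set. A shape is an open set with $0<|S|<\infty$; a basis of shapes in $\Omega$ is a collection of shapes contained in $\Omega$ covering $\Omega$. For $f\in L^1(S)$, $f_S=\frac1{|S|}\int_Sf$. $\mathrm{BMO}^p_{\mathcal{S}}(\Omega)$ is the space of $f$ with $f\in L^1(S)$ for all $S\in\mathcal{S}$ and $\|f\|_{\mathrm{BMO}^p_{\mathcal{S}}}:=\sup_{S\in\mathcal{S}}\big(\frac1{|S|}\int_S|f-f_S|^p\big)^{1/p}<\infty$. A function $f\in L^1_{loc}(\Omega)$ has the John–Nirenberg property with respect to $\mathcal{S}$ if there exist $c_1,c_2>0$ such that for all $S\in\mathcal{S}$ and all $\alpha>0$, $|\{x\in S:|f(x)-f_S|>\alpha\}|\le c_1|S|e^{-c_2\alpha}$. The notation $X\cong Y$ means the two spaces coincide as sets with equivalent (semi)norms. *)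

theory Defs
  imports "HOL-Analysis.Analysis"
begin

definition domain :: "'a::euclidean_space set \<Rightarrow> bool" where
  "domain \<Omega> \<longleftrightarrow> open \<Omega> \<and> connected \<Omega>"

definition shape :: "'a::euclidean_space set \<Rightarrow> bool" where
  "shape S \<longleftrightarrow> open S \<and> 0 < emeasure lebesgue S \<and> emeasure lebesgue S < \<infinity>"

definition basis_of_shapes :: "'a::euclidean_space set set \<Rightarrow> 'a set \<Rightarrow> bool" where
  "basis_of_shapes \<S> \<Omega> \<longleftrightarrow> (\<forall>S\<in>\<S>. shape S \<and> S \<subseteq> \<Omega>) \<and> \<Union>\<S> = \<Omega>"

definition avg :: "('a::euclidean_space \<Rightarrow> real) \<Rightarrow> 'a set \<Rightarrow> real" where
  "avg f S = (LINT x:S|lebesgue. f x) / measure lebesgue S"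

text \<open>The p-oscillation ((1/|S|) \<integral>_S |f - f_S|^p)^(1/p) (meaningful when the integral is finite).\<close>
definition bmo_osc :: "real \<Rightarrow> ('a::euclidean_space \<Rightarrow> real) \<Rightarrow> 'a set \<Rightarrow> real" where
  "bmo_osc p f S =
     (enn2real (\<integral>\<^sup>+ x\<in>S. ennreal (\<bar>f x - avg f S\<bar> powr p) \<partial>lebesgue) / measure lebesgue S) powr (1 / p)"

definition in_BMO :: "real \<Rightarrow> 'a::euclidean_space set set \<Rightarrow> ('a \<Rightarrow> real) \<Rightarrow> bool" where
  "in_BMO p \<S> f \<longleftrightarrow>
     (\<forall>S\<in>\<S>. set_integrable lebesgue S f) \<and>
     (\<forall>S\<in>\<S>. (\<integral>\<^sup>+ x\<in>S. ennreal (\<bar>f x - avg f S\<bar> powr p) \<partial>lebesgue) < \<infinity>) \<and>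
     bdd_above ((\<lambda>S. bmo_osc p f S) ` \<S>)"

definition bmo_norm :: "real \<Rightarrow> 'a::euclidean_space set set \<Rightarrow> ('a \<Rightarrow> real) \<Rightarrow> real" where
  "bmo_norm p \<S> f = (SUP S\<in>\<S>. bmo_osc p f S)"

definition locally_integrable_on :: "('a::euclidean_space \<Rightarrow> real) \<Rightarrow> 'a set \<Rightarrow> bool" where
  "locally_integrable_on f \<Omega> \<longleftrightarrow>
     (\<forall>K. compact K \<and> K \<subseteq> \<Omega> \<longrightarrow> set_integrable lebesgue K f)"

definition john_nirenberg :: "'a::euclidean_space set \<Rightarrow> 'a set set \<Rightarrow> ('a \<Rightarrow> real) \<Rightarrow> bool" where
  "john_nirenberg \<Omega> \<S> f \<longleftrightarrow> locally_integrable_on f \<Omega> \<and>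
     (\<exists>c1>0. \<exists>c2>0. \<forall>S\<in>\<S>. \<forall>\<alpha>>0.
        measure lebesgue {x\<in>S. \<bar>f x - avg f S\<bar> > \<alpha>}
          \<le> c1 * measure lebesgue S * exp (- c2 * \<alpha>))"

end

theory Submission
  imports Defs "HOL-Real_Asymp.Real_Asymp"
begin

(* BMO^p shrinks as p grows, and the John-Nirenberg inequality puts every f in BMO^p0 into
   BMO^q for every q, so the spaces BMO^p with p >= p0 coincide as sets. The real content is a
   uniform bound ||f||_q <= C ||f||_p0, obtained by a gliding hump argument in place of the
   closed graph theorem: if it failed, one could add up humps h_n with ||h_n||_p0 <= 4^-n whose
   partial sums have large q-oscillation on some shape S_n. Truncating |f - f_S| at a level T
   makes its q-th power Lipschitz with respect to L^1 perturbations, so humps added later,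
   chosen small in L^1 relative to T, cannot destroy this; the sum then lies in BMO^p0 but not
   in BMO^q, contradicting the John-Nirenberg property. The series converges in L^1 on every
   shape because each hump has mean zero on a fixed shape S0 and, the domain being connected,
   the means of a function over any two shapes differ by at most a constant times its
   BMO norm. *)

section \<open>Mean oscillation on finite measure spaces\<close>

lemma powr_le_split:
  fixes p q t u :: real
  assumes "0 < p" "p \<le> q" "0 < t" "0 \<le> u"
  shows "u powr p \<le> t powr p + t powr (p - q) * u powr q"
proof (cases "u \<le> t")
  case True
  then have "u powr p \<le> t powr p" using assms by (intro powr_mono2) auto
  then show ?thesis by (simp add: add_increasing2)
next
  case False
  then have "u powr p = u powr (p - q) * u powr q"
    using assms by (simp add: powr_add[symmetric])
  also have "\<dots> \<le> t powr (p - q) * u powr q"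
    using False assms by (intro mult_right_mono powr_mono2') auto
  finally show ?thesis by (simp add: add_increasing)
qed

lemma abs_add_powr_le:
  fixes p x y :: real
  assumes "0 < p"
  shows "\<bar>x + y\<bar> powr p \<le> 2 powr p * (\<bar>x\<bar> powr p + \<bar>y\<bar> powr p)"
proof -
  have "\<bar>x + y\<bar> powr p \<le> (2 * max \<bar>x\<bar> \<bar>y\<bar>) powr p"
    using assms by (intro powr_mono2) auto
  also have "\<dots> = 2 powr p * max \<bar>x\<bar> \<bar>y\<bar> powr p" by (simp add: powr_mult)
  also have "max \<bar>x\<bar> \<bar>y\<bar> powr p \<le> \<bar>x\<bar> powr p + \<bar>y\<bar> powr p"
    by (cases "\<bar>x\<bar> \<le> \<bar>y\<bar>") (auto simp: max_def)
  finally show ?thesis by (simp add: mult_left_mono)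
qed

lemma two_powr_inverse_le: "1 \<le> p \<Longrightarrow> (2::real) powr (1 / p) \<le> 2"
  using powr_mono[of "1 / p" 1 2] by simp

lemma summable_powr_mult_exp:
  fixes q c :: real
  assumes "0 < c"
  shows "summable (\<lambda>k. (real k + 2) powr q * exp (- c * (real k + 1)))"
proof (rule summable_comparison_test_ev)
  have "((\<lambda>k. (real k + 2) powr q * exp (- c * (real k + 1)) * (real k)\<^sup>2) \<longlongrightarrow> 0) at_top"
    using assms by real_asymp
  then have "eventually (\<lambda>k. (real k + 2) powr q * exp (- c * (real k + 1)) * (real k)\<^sup>2 < 1) at_top"
    by (rule order_tendstoD) simp
  then show "eventually (\<lambda>k. norm ((real k + 2) powr q * exp (- c * (real k + 1)))
      \<le> inverse (real k ^ 2)) at_top"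
    using eventually_gt_at_top[of "0::nat"] by eventually_elim (simp add: field_simps)
  show "summable (\<lambda>k. inverse (real k ^ 2))"
    using inverse_power_summable[of 2] by simp
qed

definition mean :: "'b measure \<Rightarrow> ('b \<Rightarrow> real) \<Rightarrow> real" where
  "mean M f = integral\<^sup>L M f / measure M (space M)"

definition osc_integral :: "'b measure \<Rightarrow> real \<Rightarrow> ('b \<Rightarrow> real) \<Rightarrow> ennreal" where
  "osc_integral M p f = (\<integral>\<^sup>+x. ennreal (\<bar>f x - mean M f\<bar> powr p) \<partial>M)"

definition osc :: "'b measure \<Rightarrow> real \<Rightarrow> ('b \<Rightarrow> real) \<Rightarrow> real" where
  "osc M p f = (enn2real (osc_integral M p f) / measure M (space M)) powr (1 / p)"

lemma osc_nonneg: "0 \<le> osc M p f"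
  by (simp add: osc_def)

locale finite_measure_pos = finite_measure M for M :: "'b measure" +
  assumes mass_pos: "0 < measure M (space M)"
begin

abbreviation mass :: real where "mass \<equiv> measure M (space M)"

lemma mean_add:
  "integrable M f \<Longrightarrow> integrable M g \<Longrightarrow> mean M (\<lambda>x. f x + g x) = mean M f + mean M g"
  by (simp add: mean_def add_divide_distrib)

lemma mean_cmult: "mean M (\<lambda>x. c * f x) = c * mean M f"
  by (simp add: mean_def)

lemma mean_const: "mean M (\<lambda>x. c) = c"
  using mass_pos by (simp add: mean_def)

lemma mean_add_const: "integrable M f \<Longrightarrow> mean M (\<lambda>x. f x + c) = mean M f + c"
  using mean_add[of f "\<lambda>x. c"] by (simp add: mean_const)

lemma osc_integral_add_const:
  "integrable M f \<Longrightarrow> osc_integral M p (\<lambda>x. f x + c) = osc_integral M p f"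
  by (simp add: osc_integral_def mean_add_const)

lemma osc_add_const: "integrable M f \<Longrightarrow> osc M p (\<lambda>x. f x + c) = osc M p f"
  by (simp add: osc_def osc_integral_add_const)

lemma osc_integral_eq_osc:
  assumes "0 < p" "osc_integral M p f < \<infinity>"
  shows "osc_integral M p f = ennreal (mass * osc M p f powr p)"
  using assms mass_pos by (simp add: osc_def powr_powr)

lemma osc_le_if_osc_integral_le:
  assumes p: "0 < p" and K: "0 \<le> K" and le: "osc_integral M p f \<le> ennreal (mass * K)"
  shows "osc_integral M p f < \<infinity>" "osc M p f \<le> K powr (1 / p)"
proof -
  show "osc_integral M p f < \<infinity>"
    using le by (simp add: le_less_trans)
  have "enn2real (osc_integral M p f) \<le> mass * K"
    using enn2real_mono[OF le] K mass_pos by simp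
  then have "enn2real (osc_integral M p f) / mass \<le> K"
    using mass_pos by (simp add: divide_le_eq mult.commute)
  then show "osc M p f \<le> K powr (1 / p)"
    unfolding osc_def using p by (intro powr_mono2) auto
qed

lemma osc_integral_le_split:
  assumes f: "f \<in> borel_measurable M" and "0 < p" "p \<le> q" "0 < t"
  shows "osc_integral M p f \<le> ennreal (mass * t powr p) + ennreal (t powr (p - q)) * osc_integral M q f"
proof -
  have "osc_integral M p f \<le> (\<integral>\<^sup>+x. ennreal (t powr p) + ennreal (t powr (p - q)) *
      ennreal (\<bar>f x - mean M f\<bar> powr q) \<partial>M)"
    unfolding osc_integral_def using assms powr_le_split
    by (intro nn_integral_mono)
       (auto simp: ennreal_mult[symmetric] ennreal_plus[symmetric] simp del: ennreal_plus)
  also have "\<dots> = ennreal (mass * t powr p) + ennreal (t powr (p - q)) * osc_integral M q f"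
    unfolding osc_integral_def using f
    by (subst nn_integral_add) (auto simp: nn_integral_cmult emeasure_eq_measure ennreal_mult mult.commute)
  finally show ?thesis .
qed

lemma osc_mono:
  assumes f: "f \<in> borel_measurable M" and p: "1 \<le> p" "p \<le> q" and fin: "osc_integral M q f < \<infinity>"
  shows "osc_integral M p f < \<infinity>" "osc M p f \<le> 2 * osc M q f"
proof -
  have q: "0 < q" using p by simp
  have bound: "osc_integral M p f \<le> ennreal (mass * (2 * t powr p))" if t: "osc M q f < t" for t
  proof -
    have t0: "0 < t" using t osc_nonneg[of M q f] by linarith
    have "t powr (p - q) * (mass * osc M q f powr q) \<le> t powr (p - q) * (mass * t powr q)"
      using t q mass_pos by (intro mult_left_mono powr_mono2) (auto simp: osc_nonneg)
    also have "\<dots> = mass * t powr p"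
      using t0 by (simp add: powr_add[symmetric])
    finally have tail: "t powr (p - q) * (mass * osc M q f powr q) \<le> mass * t powr p" .
    have "osc_integral M p f \<le> ennreal (mass * t powr p) + ennreal (t powr (p - q)) * osc_integral M q f"
      using osc_integral_le_split[OF f _ p(2) t0] p by simp
    also have "\<dots> = ennreal (mass * t powr p + t powr (p - q) * (mass * osc M q f powr q))"
      using mass_pos by (simp add: osc_integral_eq_osc[OF q fin] ennreal_mult[symmetric] ennreal_plus[symmetric] del: ennreal_plus)
    also have "\<dots> \<le> ennreal (mass * (2 * t powr p))"
      using tail by (intro ennreal_leI) (simp add: mult.commute)
    finally show ?thesis .
  qed
  have p0: "0 < p" using p by simp
  show "osc_integral M p f < \<infinity>"
    using osc_le_if_osc_integral_le(1)[OF p0 _ bound, of "osc M q f + 1"] by simp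
  have "osc M p f / 2 \<le> t" if t: "osc M q f < t" for t
  proof -
    have t0: "0 < t" using t osc_nonneg[of M q f] by linarith
    have "osc M p f \<le> (2 * t powr p) powr (1 / p)"
      using osc_le_if_osc_integral_le(2)[OF p0 _ bound[OF t]] by simp
    also have "\<dots> = 2 powr (1 / p) * t"
      using t0 p0 by (simp add: powr_mult powr_powr)
    also have "\<dots> \<le> 2 * t"
      using two_powr_inverse_le[OF p(1)] t0 by simp
    finally show ?thesis by simp
  qed
  then show "osc M p f \<le> 2 * osc M q f"
    using dense_ge[of "osc M q f" "osc M p f / 2"] by simp
qed

lemma nn_integral_abs_dev_le_osc:
  assumes f: "f \<in> borel_measurable M" and p: "1 \<le> p" and fin: "osc_integral M p f < \<infinity>"
  shows "(\<integral>\<^sup>+x. ennreal \<bar>f x - mean M f\<bar> \<partial>M) \<le> ennreal (2 * mass * osc M p f)"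
proof -
  have fin1: "osc_integral M 1 f < \<infinity>" and le: "osc M 1 f \<le> 2 * osc M p f"
    using osc_mono[OF f _ p fin] by auto
  have "(\<integral>\<^sup>+x. ennreal \<bar>f x - mean M f\<bar> \<partial>M) = ennreal (mass * osc M 1 f)"
    using osc_integral_eq_osc[OF _ fin1] by (simp add: osc_integral_def osc_nonneg)
  also have "\<dots> \<le> ennreal (2 * mass * osc M p f)"
    using le mass_pos by (intro ennreal_leI) simp
  finally show ?thesis .
qed

lemma osc_integral_cmult:
  assumes f: "f \<in> borel_measurable M" and p: "0 < p"
  shows "osc_integral M p (\<lambda>x. c * f x) = ennreal (\<bar>c\<bar> powr p) * osc_integral M p f"
proof -
  have "\<bar>c * f x - mean M (\<lambda>x. c * f x)\<bar> = \<bar>c\<bar> * \<bar>f x - mean M f\<bar>" for x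
    by (simp add: mean_cmult abs_mult[symmetric] right_diff_distrib)
  then have "\<bar>c * f x - mean M (\<lambda>x. c * f x)\<bar> powr p = \<bar>c\<bar> powr p * \<bar>f x - mean M f\<bar> powr p" for x
    by (simp add: powr_mult)
  then show ?thesis
    unfolding osc_integral_def using f by (simp add: ennreal_mult nn_integral_cmult)
qed

lemma osc_cmult:
  assumes f: "f \<in> borel_measurable M" and p: "0 < p"
  shows "osc M p (\<lambda>x. c * f x) = \<bar>c\<bar> * osc M p f"
proof -
  define X where "X = enn2real (osc_integral M p f) / mass"
  have X0: "0 \<le> X" using mass_pos by (simp add: X_def)
  have "osc M p (\<lambda>x. c * f x) = (\<bar>c\<bar> powr p * X) powr (1 / p)"
    unfolding osc_def osc_integral_cmult[OF f p] X_def by (simp add: enn2real_mult)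
  also have "\<dots> = (\<bar>c\<bar> powr p) powr (1 / p) * X powr (1 / p)"
    using X0 by (simp add: powr_mult)
  also have "\<dots> = \<bar>c\<bar> * osc M p f"
    using p by (simp add: powr_powr osc_def X_def)
  finally show ?thesis .
qed

lemma osc_integral_add:
  assumes f: "integrable M f" and g: "integrable M g" and p: "0 < p"
  shows "osc_integral M p (\<lambda>x. f x + g x) \<le> ennreal (2 powr p) * (osc_integral M p f + osc_integral M p g)"
proof -
  have "ennreal (\<bar>f x + g x - mean M (\<lambda>x. f x + g x)\<bar> powr p) \<le>
     ennreal (2 powr p) * (ennreal (\<bar>f x - mean M f\<bar> powr p) + ennreal (\<bar>g x - mean M g\<bar> powr p))" for x
    using abs_add_powr_le[OF p, of "f x - mean M f" "g x - mean M g"]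
    by (simp add: mean_add[OF f g] ennreal_mult[symmetric] ennreal_plus[symmetric] algebra_simps
        del: ennreal_plus)
  then have "osc_integral M p (\<lambda>x. f x + g x) \<le> (\<integral>\<^sup>+x. ennreal (2 powr p) *
      (ennreal (\<bar>f x - mean M f\<bar> powr p) + ennreal (\<bar>g x - mean M g\<bar> powr p)) \<partial>M)"
    unfolding osc_integral_def by (intro nn_integral_mono)
  also have "\<dots> = ennreal (2 powr p) * (osc_integral M p f + osc_integral M p g)"
    unfolding osc_integral_def using f g by (simp add: nn_integral_cmult nn_integral_add)
  finally show ?thesis .
qed

lemma osc_add:
  assumes f: "integrable M f" and g: "integrable M g" and p: "1 \<le> p"
    and fin_f: "osc_integral M p f < \<infinity>" and fin_g: "osc_integral M p g < \<infinity>"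
  shows "osc_integral M p (\<lambda>x. f x + g x) < \<infinity>"
    "osc M p (\<lambda>x. f x + g x) \<le> 4 * (osc M p f + osc M p g)"
proof -
  have p0: "0 < p" using p by simp
  define a b where "a = osc M p f" and "b = osc M p g"
  have ab: "0 \<le> a" "0 \<le> b" by (simp_all add: a_def b_def osc_nonneg)
  have "a powr p + b powr p \<le> 2 * (a + b) powr p"
    using ab p0 powr_mono2[of p a "a + b"] powr_mono2[of p b "a + b"] by simp
  then have "(mass * 2 powr p) * (a powr p + b powr p) \<le> (mass * 2 powr p) * (2 * (a + b) powr p)"
    using mass_pos by (intro mult_left_mono) auto
  then have sum_le: "2 powr p * (mass * a powr p + mass * b powr p) \<le> mass * (2 powr p * 2 * (a + b) powr p)"
    by (simp add: algebra_simps)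
  have "osc_integral M p (\<lambda>x. f x + g x) \<le> ennreal (2 powr p) * (osc_integral M p f + osc_integral M p g)"
    by (rule osc_integral_add[OF f g p0])
  also have "\<dots> = ennreal (2 powr p * (mass * a powr p + mass * b powr p))"
    using mass_pos unfolding a_def b_def osc_integral_eq_osc[OF p0 fin_f] osc_integral_eq_osc[OF p0 fin_g]
    by (simp add: ennreal_mult[symmetric] ennreal_plus[symmetric] del: ennreal_plus)
  also have "\<dots> \<le> ennreal (mass * (2 powr p * 2 * (a + b) powr p))"
    using sum_le by (rule ennreal_leI)
  finally have le: "osc_integral M p (\<lambda>x. f x + g x) \<le> \<dots>" .
  note osc_le_if_osc_integral_le[OF p0 _ le]
  then show "osc_integral M p (\<lambda>x. f x + g x) < \<infinity>" by simp
  have "(2 powr p * 2 * (a + b) powr p) powr (1 / p) = 2 * 2 powr (1 / p) * (a + b)"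
    using p0 ab by (simp add: powr_mult powr_powr)
  also have "\<dots> \<le> 4 * (a + b)"
    using mult_right_mono[of "2 * 2 powr (1 / p)" 4 "a + b"] two_powr_inverse_le[OF p] ab by simp
  finally show "osc M p (\<lambda>x. f x + g x) \<le> 4 * (osc M p f + osc M p g)"
    using osc_le_if_osc_integral_le(2)[OF p0 _ le] by (simp add: a_def b_def)
qed

lemma osc_integral_le_of_exp_decay:
  assumes f: "f \<in> borel_measurable M" and q: "0 < q" and c1: "0 \<le> c1" and c2: "0 < c2"
    and decay: "\<And>\<alpha>. 0 < \<alpha> \<Longrightarrow>
      measure M {x\<in>space M. \<bar>f x - mean M f\<bar> > \<alpha>} \<le> c1 * mass * exp (- c2 * \<alpha>)"
  shows "osc_integral M q f
    \<le> ennreal (mass * (1 + c1 * (\<Sum>k. (real k + 2) powr q * exp (- c2 * (real k + 1)))))"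
proof -
  define u where "u x = \<bar>f x - mean M f\<bar>" for x
  define a where "a = (\<lambda>k::nat. (real k + 2) powr q * exp (- c2 * (real k + 1)))"
  define E where "E k = {x\<in>space M. u x > real k + 1}" for k :: nat
  have sum_a: "summable a"
    unfolding a_def by (rule summable_powr_mult_exp[OF c2])
  have a_nonneg: "0 \<le> a k" for k by (simp add: a_def)
  have [measurable]: "u \<in> borel_measurable M" using f by (simp add: u_def[abs_def])
  have [measurable]: "E k \<in> sets M" for k by (simp add: E_def)
  have layer_cake: "ennreal (u x powr q) \<le> 1 + (\<Sum>k. ennreal ((real k + 2) powr q) * indicator (E k) x)"
    if x: "x \<in> space M" for x
  proof (cases "u x \<le> 1")
    case True
    then have "u x powr q \<le> 1" using q powr_mono2[of q "u x" 1] by (simp add: u_def)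
    then show ?thesis by (simp add: add_increasing2 ennreal_le_1)
  next
    case False
    define k where "k = nat (\<lceil>u x\<rceil> - 2)"
    have "2 \<le> \<lceil>u x\<rceil>" using False by (simp add: le_ceiling_iff)
    then have "real k = of_int \<lceil>u x\<rceil> - 2" by (simp add: k_def)
    then have k: "real k + 1 < u x" "u x \<le> real k + 2" by linarith+
    define F where "F = (\<lambda>k. ennreal ((real k + 2) powr q) * indicator (E k) x)"
    have "ennreal (u x powr q) \<le> F k"
      using k x q by (simp add: F_def E_def ennreal_leI powr_mono2 u_def)
    also have "F k \<le> suminf F"
      using sum_le_suminf[of F "{k}"] by (simp add: summableI)
    finally show ?thesis by (simp add: F_def add_increasing)
  qed
  have "osc_integral M q f = (\<integral>\<^sup>+x. ennreal (u x powr q) \<partial>M)"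
    by (simp add: osc_integral_def u_def)
  also have "\<dots> \<le> (\<integral>\<^sup>+x. 1 + (\<Sum>k. ennreal ((real k + 2) powr q) * indicator (E k) x) \<partial>M)"
    by (intro nn_integral_mono layer_cake)
  also have "\<dots> = ennreal mass + (\<Sum>k. ennreal ((real k + 2) powr q) * emeasure M (E k))"
    by (simp add: nn_integral_add nn_integral_suminf nn_integral_cmult_indicator emeasure_eq_measure)
  also have "\<dots> \<le> ennreal mass + (\<Sum>k. ennreal (c1 * mass * a k))"
  proof (intro add_left_mono suminf_le summableI)
    fix k
    have "measure M (E k) \<le> c1 * mass * exp (- c2 * (real k + 1))"
      unfolding E_def u_def by (rule decay) simp
    then show "ennreal ((real k + 2) powr q) * emeasure M (E k) \<le> ennreal (c1 * mass * a k)"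
      using c1 mass_pos
      by (simp add: a_def emeasure_eq_measure ennreal_mult[symmetric] ennreal_leI mult_left_mono mult_ac)
  qed
  also have "(\<Sum>k. ennreal (c1 * mass * a k)) = ennreal (c1 * mass * suminf a)"
    using c1 mass_pos sum_a
    by (subst suminf_ennreal2) (auto simp: a_nonneg suminf_mult intro: summable_mult)
  also have "ennreal mass + \<dots> = ennreal (mass * (1 + c1 * suminf a))"
    using c1 mass_pos suminf_nonneg[OF sum_a a_nonneg]
    by (simp add: ennreal_plus[symmetric] algebra_simps del: ennreal_plus)
  finally show ?thesis by (simp only: a_def)
qed

end

section \<open>Series with geometrically small oscillations\<close>

lemma sum_powr_le_weighted:
  fixes x w :: "nat \<Rightarrow> real" and p :: real
  assumes p: "1 \<le> p" and x: "\<And>j. 0 \<le> x j" and w: "\<And>j. 0 < w j" and w_sum: "(\<Sum>j<n. w j) \<le> 1"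
  shows "(\<Sum>j<n. x j) powr p \<le> (\<Sum>j<n. (x j / w j) powr p)"
proof (cases "n = 0")
  case False
  define R where "R = Max ((\<lambda>j. x j / w j) ` {..<n})"
  have "R \<in> (\<lambda>j. x j / w j) ` {..<n}"
    unfolding R_def using False by (intro Max_in) auto
  then obtain k where k: "k < n" "R = x k / w k" by auto
  have R0: "0 \<le> R" using k x w by (simp add: less_imp_le)
  have "(\<Sum>j<n. x j) = (\<Sum>j<n. w j * (x j / w j))"
    using w by (intro sum.cong) (auto simp: less_imp_neq[symmetric])
  also have "\<dots> \<le> (\<Sum>j<n. w j * R)"
    using w by (intro sum_mono mult_left_mono) (auto simp: R_def less_imp_le)
  also have "\<dots> = R * (\<Sum>j<n. w j)"
    by (simp add: sum_distrib_left mult.commute)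
  also have "\<dots> \<le> R"
    using w_sum R0 by (simp add: mult_left_le)
  finally have "(\<Sum>j<n. x j) powr p \<le> R powr p"
    using p x by (intro powr_mono2) (auto intro: sum_nonneg)
  also have "\<dots> \<le> (\<Sum>j<n. (x j / w j) powr p)"
    unfolding k(2) by (rule member_le_sum) (use k in auto)
  finally show ?thesis .
qed simp

(* Stands in for Minkowski's inequality in L^p, via the weights 2^-(j+1), which sum to at most 1. *)
lemma suminf_powr_le_weighted:
  fixes x :: "nat \<Rightarrow> real" and p :: real
  assumes p: "1 \<le> p" and x: "summable (\<lambda>j. \<bar>x j\<bar>)"
  shows "ennreal (\<bar>\<Sum>j. x j\<bar> powr p) \<le> (\<Sum>j. ennreal ((2 ^ Suc j * \<bar>x j\<bar>) powr p))"
proof -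
  define w where "w j = (1/2::real) ^ Suc j" for j
  have w: "0 < w j" for j by (simp add: w_def)
  have w_sum: "(\<Sum>j<n. w j) \<le> 1" for n
  proof -
    have "(\<Sum>j<n. w j) = 1 - (1/2) ^ n"
      by (induction n) (simp_all add: w_def)
    then show ?thesis by simp
  qed
  have weighted: "\<bar>x j\<bar> / w j = 2 ^ Suc j * \<bar>x j\<bar>" for j
    by (simp add: w_def power_one_over)
  have partial: "ennreal ((\<Sum>j<n. \<bar>x j\<bar>) powr p) \<le> (\<Sum>j. ennreal ((2 ^ Suc j * \<bar>x j\<bar>) powr p))" for n
  proof -
    have "ennreal ((\<Sum>j<n. \<bar>x j\<bar>) powr p) \<le> ennreal (\<Sum>j<n. (2 ^ Suc j * \<bar>x j\<bar>) powr p)"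
      using sum_powr_le_weighted[OF p _ w w_sum, of "\<lambda>j. \<bar>x j\<bar>"] by (intro ennreal_leI) (simp add: weighted)
    also have "\<dots> = (\<Sum>j<n. ennreal ((2 ^ Suc j * \<bar>x j\<bar>) powr p))"
      by (rule sum_ennreal[symmetric]) simp
    also have "\<dots> \<le> (\<Sum>j. ennreal ((2 ^ Suc j * \<bar>x j\<bar>) powr p))"
      by (rule sum_le_suminf) (auto intro: summableI)
    finally show ?thesis .
  qed
  have "(\<lambda>n. ennreal ((\<Sum>j<n. \<bar>x j\<bar>) powr p)) \<longlonglongrightarrow> ennreal ((\<Sum>j. \<bar>x j\<bar>) powr p)"
    using p summable_LIMSEQ[OF x]
    by (intro tendsto_ennrealI tendsto_powr') (auto intro!: always_eventually sum_nonneg)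
  then have "ennreal ((\<Sum>j. \<bar>x j\<bar>) powr p) \<le> (\<Sum>j. ennreal ((2 ^ Suc j * \<bar>x j\<bar>) powr p))"
    by (rule LIMSEQ_le_const2) (use partial in auto)
  moreover have "ennreal (\<bar>\<Sum>j. x j\<bar> powr p) \<le> ennreal ((\<Sum>j. \<bar>x j\<bar>) powr p)"
    using summable_rabs[OF x] p by (intro ennreal_leI powr_mono2) auto
  ultimately show ?thesis by (rule order_trans[rotated])
qed

lemma AE_summable_if_summable_integral:
  fixes h :: "nat \<Rightarrow> 'b \<Rightarrow> real"
  assumes h: "\<And>j. integrable M (h j)" and sum: "summable (\<lambda>j. \<integral>x. \<bar>h j x\<bar> \<partial>M)"
  shows "AE x in M. summable (\<lambda>j. \<bar>h j x\<bar>)"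
proof -
  have [measurable]: "h j \<in> borel_measurable M" for j using h by auto
  have "(\<integral>\<^sup>+x. (\<Sum>j. ennreal \<bar>h j x\<bar>) \<partial>M) = (\<Sum>j. ennreal (\<integral>x. \<bar>h j x\<bar> \<partial>M))"
    using h by (simp add: nn_integral_suminf nn_integral_eq_integral)
  also have "\<dots> = ennreal (\<Sum>j. \<integral>x. \<bar>h j x\<bar> \<partial>M)"
    using sum by (intro suminf_ennreal2) auto
  finally have "AE x in M. (\<Sum>j. ennreal \<bar>h j x\<bar>) \<noteq> \<infinity>"
    by (intro nn_integral_PInf_AE) auto
  then show ?thesis
    by eventually_elim (auto intro: summable_suminf_not_top)
qed

context finite_measure_pos
begin

lemma nn_integral_abs_le_osc:
  assumes f: "f \<in> borel_measurable M" and p: "1 \<le> p" and fin: "osc_integral M p f < \<infinity>"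
  shows "(\<integral>\<^sup>+x. ennreal \<bar>f x\<bar> \<partial>M) \<le> ennreal (mass * (2 * osc M p f + \<bar>mean M f\<bar>))"
proof -
  have "(\<integral>\<^sup>+x. ennreal \<bar>f x\<bar> \<partial>M) \<le> (\<integral>\<^sup>+x. ennreal \<bar>f x - mean M f\<bar> + ennreal \<bar>mean M f\<bar> \<partial>M)"
    by (intro nn_integral_mono) (simp add: ennreal_plus[symmetric] del: ennreal_plus)
  also have "\<dots> = (\<integral>\<^sup>+x. ennreal \<bar>f x - mean M f\<bar> \<partial>M) + ennreal (mass * \<bar>mean M f\<bar>)"
    using f by (simp add: nn_integral_add emeasure_eq_measure ennreal_mult mult.commute)
  also have "\<dots> \<le> ennreal (2 * mass * osc M p f) + ennreal (mass * \<bar>mean M f\<bar>)"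
    by (intro add_right_mono nn_integral_abs_dev_le_osc[OF f p fin])
  also have "\<dots> = ennreal (mass * (2 * osc M p f + \<bar>mean M f\<bar>))"
    using mass_pos by (simp add: osc_nonneg ennreal_plus[symmetric] algebra_simps del: ennreal_plus)
  finally show ?thesis .
qed

context
  fixes p K :: real and h :: "nat \<Rightarrow> 'b \<Rightarrow> real" and \<epsilon> :: "nat \<Rightarrow> real"
  assumes p: "1 \<le> p" and h: "\<And>j. integrable M (h j)" and h_fin: "\<And>j. osc_integral M p (h j) < \<infinity>"
    and h_osc: "\<And>j. osc M p (h j) \<le> \<epsilon> j" and \<epsilon>: "summable \<epsilon>"
    and K: "0 \<le> K" and h_mean: "\<And>j. \<bar>mean M (h j)\<bar> \<le> K * \<epsilon> j"
begin

private lemma series_eps_nonneg: "0 \<le> \<epsilon> j"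
  using h_osc[of j] osc_nonneg[of M p "h j"] by linarith

private lemma summable_abs_mean: "summable (\<lambda>j. \<bar>mean M (h j)\<bar>)"
  by (rule summable_comparison_test[OF _ summable_mult[OF \<epsilon>, of K]]) (use h_mean in auto)

private lemma summable_integral_abs: "summable (\<lambda>j. \<integral>x. \<bar>h j x\<bar> \<partial>M)"
proof (rule summable_comparison_test'[OF summable_mult[OF \<epsilon>, of "mass * (2 + K)"]])
  fix j
  have "ennreal (\<integral>x. \<bar>h j x\<bar> \<partial>M) \<le> ennreal (mass * (2 * osc M p (h j) + \<bar>mean M (h j)\<bar>))"
    using nn_integral_abs_le_osc[OF _ p h_fin, of j] h[of j] by (simp add: nn_integral_eq_integral)
  then have "(\<integral>x. \<bar>h j x\<bar> \<partial>M) \<le> mass * (2 * osc M p (h j) + \<bar>mean M (h j)\<bar>)"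
    using mass_pos osc_nonneg[of M p "h j"] by (subst (asm) ennreal_le_iff) auto
  also have "\<dots> \<le> mass * ((2 + K) * \<epsilon> j)"
    unfolding distrib_right using h_osc[of j] h_mean[of j] mass_pos by (intro mult_left_mono) auto
  finally show "norm (\<integral>x. \<bar>h j x\<bar> \<partial>M) \<le> mass * (2 + K) * \<epsilon> j"
    by (simp add: integral_nonneg mult.assoc)
qed

lemma AE_summable_series: "AE x in M. summable (\<lambda>j. \<bar>h j x\<bar>)"
  by (rule AE_summable_if_summable_integral[OF h summable_integral_abs])

private lemma AE_summable_norm: "AE x in M. summable (\<lambda>j. norm (h j x))"
  using AE_summable_series by simp

private lemma summable_integral_norm: "summable (\<lambda>j. \<integral>x. norm (h j x) \<partial>M)"
  using summable_integral_abs by simp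

lemma integrable_series: "integrable M (\<lambda>x. \<Sum>j. h j x)"
  by (rule integrable_suminf[OF h AE_summable_norm summable_integral_norm])

lemma mean_series: "mean M (\<lambda>x. \<Sum>j. h j x) = (\<Sum>j. mean M (h j))"
  unfolding mean_def integral_suminf[OF h AE_summable_norm summable_integral_norm]
  by (rule suminf_divide[symmetric, OF summable_integral[OF h AE_summable_norm summable_integral_norm]])

lemma series_minus_mean:
  "AE x in M. (\<Sum>j. h j x) - mean M (\<lambda>x. \<Sum>j. h j x) = (\<Sum>j. h j x - mean M (h j))
    \<and> summable (\<lambda>j. \<bar>h j x - mean M (h j)\<bar>)"
  using AE_summable_series
proof eventually_elim
  case (elim x)
  have "summable (\<lambda>j. \<bar>h j x - mean M (h j)\<bar>)"
    by (rule summable_comparison_test[of _ "\<lambda>j. \<bar>h j x\<bar> + \<bar>mean M (h j)\<bar>"])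
       (use elim summable_abs_mean in \<open>auto intro!: summable_add\<close>)
  moreover have "(\<Sum>j. h j x) - mean M (\<lambda>x. \<Sum>j. h j x) = (\<Sum>j. h j x - mean M (h j))"
    unfolding mean_series
    using elim summable_abs_mean by (intro suminf_diff) (auto intro: summable_rabs_cancel)
  ultimately show ?case by simp
qed

lemma nn_integral_abs_dev_series_le:
  "(\<integral>\<^sup>+x. ennreal \<bar>(\<Sum>j. h j x) - mean M (\<lambda>x. \<Sum>j. h j x)\<bar> \<partial>M) \<le> ennreal (2 * mass * suminf \<epsilon>)"
proof -
  have [measurable]: "h j \<in> borel_measurable M" for j using h by auto
  have "AE x in M. ennreal \<bar>(\<Sum>j. h j x) - mean M (\<lambda>x. \<Sum>j. h j x)\<bar>
      \<le> (\<Sum>j. ennreal \<bar>h j x - mean M (h j)\<bar>)"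
    using series_minus_mean
    by eventually_elim (auto simp: suminf_ennreal2 ennreal_leI summable_rabs)
  then have "(\<integral>\<^sup>+x. ennreal \<bar>(\<Sum>j. h j x) - mean M (\<lambda>x. \<Sum>j. h j x)\<bar> \<partial>M)
      \<le> (\<Sum>j. \<integral>\<^sup>+x. ennreal \<bar>h j x - mean M (h j)\<bar> \<partial>M)"
    by (subst nn_integral_suminf[symmetric]) (auto intro: nn_integral_mono_AE)
  also have "\<dots> \<le> (\<Sum>j. ennreal (2 * mass * \<epsilon> j))"
  proof (intro suminf_le summableI)
    fix j
    have "2 * mass * osc M p (h j) \<le> 2 * mass * \<epsilon> j" using h_osc[of j] mass_pos by simp
    with nn_integral_abs_dev_le_osc[OF _ p h_fin, of j] h[of j]
    show "(\<integral>\<^sup>+x. ennreal \<bar>h j x - mean M (h j)\<bar> \<partial>M) \<le> ennreal (2 * mass * \<epsilon> j)"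
      by (auto intro: order_trans[OF _ ennreal_leI])
  qed
  also have "\<dots> = ennreal (2 * mass * suminf \<epsilon>)"
    using series_eps_nonneg mass_pos \<epsilon> by (simp add: suminf_ennreal2 summable_mult suminf_mult)
  finally show ?thesis .
qed

lemma osc_series_le:
  assumes \<epsilon>_geometric: "\<And>j. \<epsilon> j \<le> (1/4) ^ j"
  shows "osc_integral M p (\<lambda>x. \<Sum>j. h j x) < \<infinity>" "osc M p (\<lambda>x. \<Sum>j. h j x) \<le> 4"
proof -
  have p0: "0 < p" using p by simp
  have [measurable]: "h j \<in> borel_measurable M" for j using h by auto
  have term_bound: "osc_integral M p (\<lambda>x. 2 ^ Suc j * h j x) \<le> ennreal (mass * (2 powr p * (1/2) ^ j))"
    for j
  proof -
    have "osc M p (\<lambda>x. 2 ^ Suc j * h j x) = 2 ^ Suc j * osc M p (h j)"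
      using osc_cmult[OF _ p0, of "h j"] by simp
    also have "\<dots> \<le> 2 ^ Suc j * (1/4) ^ j"
      using h_osc[of j] \<epsilon>_geometric[of j] by simp
    also have "\<dots> = 2 * (1/2) ^ j"
      by (induction j) (simp_all add: field_simps)
    finally have "osc M p (\<lambda>x. 2 ^ Suc j * h j x) powr p \<le> (2 * (1/2) ^ j) powr p"
      using p0 by (intro powr_mono2) (auto simp: osc_nonneg)
    also have "\<dots> = 2 powr p * ((1/2) ^ j) powr p"
      by (simp add: powr_mult)
    also have "\<dots> \<le> 2 powr p * (1/2) ^ j"
      using p by (intro mult_left_mono powr_le_one_le) (auto simp: power_le_one)
    finally have "mass * osc M p (\<lambda>x. 2 ^ Suc j * h j x) powr p \<le> mass * (2 powr p * (1/2) ^ j)"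
      using mass_pos by simp
    moreover have "osc_integral M p (\<lambda>x. 2 ^ Suc j * h j x) < \<infinity>"
      using osc_integral_cmult[OF _ p0, of "h j"] h_fin[of j] by (simp add: ennreal_mult_less_top)
    ultimately show ?thesis
      by (subst osc_integral_eq_osc[OF p0]) (simp_all add: ennreal_leI)
  qed
  have "AE x in M. ennreal (\<bar>(\<Sum>j. h j x) - mean M (\<lambda>x. \<Sum>j. h j x)\<bar> powr p)
      \<le> (\<Sum>j. ennreal (\<bar>2 ^ Suc j * h j x - mean M (\<lambda>x. 2 ^ Suc j * h j x)\<bar> powr p))"
    using series_minus_mean
    by eventually_elim
       (auto simp: mean_cmult abs_mult right_diff_distrib[symmetric] dest: suminf_powr_le_weighted[OF p])
  then have "osc_integral M p (\<lambda>x. \<Sum>j. h j x) \<le> (\<Sum>j. osc_integral M p (\<lambda>x. 2 ^ Suc j * h j x))"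
    unfolding osc_integral_def
    by (subst nn_integral_suminf[symmetric]) (auto intro: nn_integral_mono_AE)
  also have "\<dots> \<le> (\<Sum>j. ennreal (mass * (2 powr p * (1/2) ^ j)))"
    by (intro suminf_le term_bound summableI)
  also have "\<dots> = ennreal (mass * (2 powr p * 2))"
    using mass_pos suminf_geometric[of "1/2::real"]
    by (simp add: suminf_ennreal2 summable_mult summable_geometric suminf_mult)
  finally have le: "osc_integral M p (\<lambda>x. \<Sum>j. h j x) \<le> ennreal (mass * (2 powr p * 2))" .
  have "(2 powr p * 2) powr (1 / p) = 2 * 2 powr (1 / p)"
    using p0 by (simp add: powr_mult powr_powr)
  also have "\<dots> \<le> 4" using two_powr_inverse_le[OF p] by simp
  finally show "osc_integral M p (\<lambda>x. \<Sum>j. h j x) < \<infinity>" "osc M p (\<lambda>x. \<Sum>j. h j x) \<le> 4"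
    using osc_le_if_osc_integral_le[OF p0 _ le] by auto
qed

end

end

section \<open>Truncated oscillation\<close>

lemma min_powr_lipschitz:
  fixes a b T q :: real
  assumes a: "0 \<le> a" and b: "0 \<le> b" and T: "0 < T" and q: "1 \<le> q"
  shows "min a T powr q \<le> min b T powr q + q * T powr (q - 1) * \<bar>a - b\<bar>"
proof -
  define x y where "x = min b T" and "y = min a T"
  have x: "0 \<le> x" "x \<le> T" and y: "0 \<le> y" "y \<le> T" using a b T by (auto simp: x_def y_def)
  have L: "0 \<le> q * T powr (q - 1)" using q by simp
  have "y powr q \<le> x powr q + q * T powr (q - 1) * (y - x)" if xy: "x < y"
  proof (cases "x = 0")
    case True
    have y0: "0 < y" using xy True by simp
    have "T powr (q - 1) \<le> q * T powr (q - 1)"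
      using q mult_right_mono[of 1 q "T powr (q - 1)"] by simp
    moreover have "y powr (q - 1) \<le> T powr (q - 1)"
      using y0 y q by (intro powr_mono2) auto
    ultimately have "y * y powr (q - 1) \<le> y * (q * T powr (q - 1))"
      using y0 by (intro mult_left_mono) auto
    then show ?thesis using True y0 q by (simp add: powr_mult_base mult_ac)
  next
    case False
    then have x0: "0 < x" using x by simp
    have "((\<lambda>z. z powr q) has_real_derivative q * t powr (q - 1)) (at t)" if "x \<le> t" for t
      using that x0 by (intro has_real_derivative_powr) auto
    then obtain z where z: "x < z" "z < y" and eq: "y powr q - x powr q = (y - x) * (q * z powr (q - 1))"
      using MVT2[OF xy, of "\<lambda>z. z powr q" "\<lambda>z. q * z powr (q - 1)"] by auto
    have "z powr (q - 1) \<le> T powr (q - 1)" using z x0 y q by (intro powr_mono2) auto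
    then have "(y - x) * (q * z powr (q - 1)) \<le> (y - x) * (q * T powr (q - 1))"
      using xy q by (intro mult_left_mono) auto
    then show ?thesis using eq by (simp add: algebra_simps)
  qed
  moreover have "\<bar>y - x\<bar> \<le> \<bar>a - b\<bar>" by (auto simp: x_def y_def min_def)
  ultimately have "y powr q \<le> x powr q + q * T powr (q - 1) * \<bar>a - b\<bar>"
    using L x y q powr_mono2[of q y x]
    by (cases "x < y") (auto intro: order_trans add_increasing2 mult_left_mono)
  then show ?thesis by (simp add: x_def y_def)
qed

definition trunc_osc_integral :: "'b measure \<Rightarrow> real \<Rightarrow> real \<Rightarrow> ('b \<Rightarrow> real) \<Rightarrow> ennreal" where
  "trunc_osc_integral M q T f = (\<integral>\<^sup>+x. ennreal (min \<bar>f x - mean M f\<bar> T powr q) \<partial>M)"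

lemma trunc_osc_integral_le: "0 < q \<Longrightarrow> 0 \<le> T \<Longrightarrow> trunc_osc_integral M q T f \<le> osc_integral M q f"
  unfolding trunc_osc_integral_def osc_integral_def
  by (intro nn_integral_mono ennreal_leI powr_mono2) auto

lemma SUP_trunc_osc_integral:
  assumes f: "f \<in> borel_measurable M" and q: "0 < q"
  shows "(SUP k. trunc_osc_integral M q (real (Suc k)) f) = osc_integral M q f"
proof -
  define u where "u x = \<bar>f x - mean M f\<bar>" for x
  have [measurable]: "u \<in> borel_measurable M" using f by (simp add: u_def[abs_def])
  have "incseq (\<lambda>k x. ennreal (min (u x) (real (Suc k)) powr q))"
    using q by (auto simp: incseq_def le_fun_def u_def intro!: ennreal_leI powr_mono2)
  then have "(SUP k. trunc_osc_integral M q (real (Suc k)) f)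
      = (\<integral>\<^sup>+x. (SUP k. ennreal (min (u x) (real (Suc k)) powr q)) \<partial>M)"
    unfolding trunc_osc_integral_def u_def[symmetric]
    by (rule nn_integral_monotone_convergence_SUP[symmetric]) auto
  also have "\<dots> = (\<integral>\<^sup>+x. ennreal (u x powr q) \<partial>M)"
  proof (intro nn_integral_cong antisym)
    fix x
    show "(SUP k. ennreal (min (u x) (real (Suc k)) powr q)) \<le> ennreal (u x powr q)"
      using q by (intro SUP_least ennreal_leI powr_mono2) (auto simp: u_def)
    have "u x \<le> real (Suc (nat \<lceil>u x\<rceil>))" by linarith
    then show "ennreal (u x powr q) \<le> (SUP k. ennreal (min (u x) (real (Suc k)) powr q))"
      by (intro SUP_upper2[of "nat \<lceil>u x\<rceil>"]) auto
  qed
  finally show ?thesis by (simp add: osc_integral_def u_def)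
qed

context finite_measure_pos
begin

lemma trunc_osc_integral_lipschitz:
  assumes f: "integrable M f" and g: "integrable M g" and d: "integrable M d"
    and fgd: "AE x in M. g x = f x + d x" and T: "0 < T" and q: "1 \<le> q"
  shows "trunc_osc_integral M q T f
    \<le> trunc_osc_integral M q T g + ennreal (q * T powr (q - 1)) * (\<integral>\<^sup>+x. ennreal \<bar>d x - mean M d\<bar> \<partial>M)"
proof -
  have [measurable]: "f \<in> borel_measurable M" "g \<in> borel_measurable M" "d \<in> borel_measurable M"
    using f g d by auto
  have L: "0 \<le> q * T powr (q - 1)" using q by simp
  have "mean M g = mean M (\<lambda>x. f x + d x)"
    unfolding mean_def using fgd by (simp add: integral_cong_AE)
  then have mean_g: "mean M g = mean M f + mean M d" using f d by (simp add: mean_add)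
  have "AE x in M. ennreal (min \<bar>f x - mean M f\<bar> T powr q)
      \<le> ennreal (min \<bar>g x - mean M g\<bar> T powr q) + ennreal (q * T powr (q - 1)) * ennreal \<bar>d x - mean M d\<bar>"
    using fgd
  proof eventually_elim
    case (elim x)
    have "\<bar>\<bar>f x - mean M f\<bar> - \<bar>g x - mean M g\<bar>\<bar> \<le> \<bar>d x - mean M d\<bar>"
      using elim mean_g by linarith
    then have "q * T powr (q - 1) * \<bar>\<bar>f x - mean M f\<bar> - \<bar>g x - mean M g\<bar>\<bar> \<le> q * T powr (q - 1) * \<bar>d x - mean M d\<bar>"
      by (rule mult_left_mono[OF _ L])
    then have "min \<bar>f x - mean M f\<bar> T powr q
        \<le> min \<bar>g x - mean M g\<bar> T powr q + q * T powr (q - 1) * \<bar>d x - mean M d\<bar>"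
      using min_powr_lipschitz[OF _ _ T q, of "\<bar>f x - mean M f\<bar>" "\<bar>g x - mean M g\<bar>"] by simp
    then show ?case
      using L by (simp add: ennreal_mult[symmetric] ennreal_plus[symmetric] ennreal_leI del: ennreal_plus)
  qed
  then have "trunc_osc_integral M q T f \<le> (\<integral>\<^sup>+x. ennreal (min \<bar>g x - mean M g\<bar> T powr q)
      + ennreal (q * T powr (q - 1)) * ennreal \<bar>d x - mean M d\<bar> \<partial>M)"
    unfolding trunc_osc_integral_def by (rule nn_integral_mono_AE)
  also have "\<dots> = trunc_osc_integral M q T g
      + ennreal (q * T powr (q - 1)) * (\<integral>\<^sup>+x. ennreal \<bar>d x - mean M d\<bar> \<partial>M)"
    unfolding trunc_osc_integral_def by (simp add: nn_integral_add nn_integral_cmult)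
  finally show ?thesis .
qed

lemma osc_powr_gt_if_trunc_osc_integral_gt:
  assumes G: "integrable M G" and g: "integrable M g" and w: "integrable M w"
    and split: "AE x in M. g x = G x + w x" and T: "0 < T" and q: "1 \<le> q" and N: "0 \<le> N"
    and big: "ennreal ((N + 1) * mass) < trunc_osc_integral M q T G"
    and small: "ennreal (q * T powr (q - 1)) * (\<integral>\<^sup>+x. ennreal \<bar>w x - mean M w\<bar> \<partial>M) \<le> ennreal mass"
    and fin: "osc_integral M q g < \<infinity>"
  shows "N < osc M q g powr q"
proof -
  have "trunc_osc_integral M q T G
      \<le> trunc_osc_integral M q T g + ennreal (q * T powr (q - 1)) * (\<integral>\<^sup>+x. ennreal \<bar>w x - mean M w\<bar> \<partial>M)"
    by (rule trunc_osc_integral_lipschitz[OF G g w split T q])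
  also have "\<dots> \<le> osc_integral M q g + ennreal mass"
    using q T by (intro add_mono trunc_osc_integral_le small) auto
  also have "\<dots> = ennreal (mass * osc M q g powr q + mass)"
    using osc_integral_eq_osc[OF _ fin] q mass_pos by (simp add: ennreal_plus)
  finally have "ennreal ((N + 1) * mass) < ennreal (mass * osc M q g powr q + mass)"
    by (rule less_le_trans[OF big])
  then have "(N + 1) * mass < mass * osc M q g powr q + mass"
    using mass_pos N by (subst (asm) ennreal_less_iff) auto
  then show ?thesis using mass_pos by (simp add: algebra_simps)
qed

end

section \<open>Shapes and BMO spaces\<close>

lemma emeasure_lebesgue_open_pos:
  fixes S :: "'a::euclidean_space set"
  assumes "open S" "S \<noteq> {}"
  shows "0 < emeasure lebesgue S"
proof -
  obtain x where "x \<in> S" using assms(2) by blast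
  then obtain e where "0 < e" "ball x e \<subseteq> S" using assms(1) openE by blast
  then obtain a b where box: "x \<in> box a b" "box a b \<subseteq> S"
    using rational_boxes[of e x] by blast
  then have "0 < emeasure lebesgue (box a b)"
    by (auto simp: emeasure_lborel_box_eq mem_box algebra_simps intro!: prod_pos)
  also have "\<dots> \<le> emeasure lebesgue S"
    using assms box by (intro emeasure_mono) (auto intro: borel_open)
  finally show ?thesis .
qed

lemma shape_sets_lebesgue: "shape S \<Longrightarrow> S \<in> sets lebesgue"
  by (simp add: shape_def borel_open)

lemma shape_nonempty: "shape S \<Longrightarrow> S \<noteq> {}"
  by (auto simp: shape_def)

lemma shape_measure_pos: "shape S \<Longrightarrow> 0 < measure lebesgue S"
  by (auto simp: shape_def measure_def enn2real_positive_iff)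

lemma shape_inter_measure_pos:
  assumes "shape S" "shape S'" "S \<inter> S' \<noteq> {}"
  shows "0 < measure lebesgue (S \<inter> S')"
proof -
  have "emeasure lebesgue (S \<inter> S') \<le> emeasure lebesgue S"
    using assms by (intro emeasure_mono) (auto simp: shape_sets_lebesgue)
  then show ?thesis
    using assms emeasure_lebesgue_open_pos[of "S \<inter> S'"]
    by (auto simp: shape_def measure_def enn2real_positive_iff)
qed

lemma measure_lebesgue_on_shape:
  "shape S \<Longrightarrow> measure (lebesgue_on S) (space (lebesgue_on S)) = measure lebesgue S"
  by (simp add: shape_sets_lebesgue measure_restrict_space)

lemma finite_measure_pos_lebesgue_on:
  assumes "shape S"
  shows "finite_measure_pos (lebesgue_on S)"
proof -
  have "finite_measure (lebesgue_on S)"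
    using assms shape_sets_lebesgue[OF assms]
    by (intro finite_measureI) (auto simp: emeasure_restrict_space shape_def)
  moreover have "0 < measure (lebesgue_on S) (space (lebesgue_on S))"
    using assms by (simp only: measure_lebesgue_on_shape shape_measure_pos)
  ultimately show ?thesis
    by (simp add: finite_measure_pos_def finite_measure_pos_axioms_def)
qed

lemma avg_eq_mean: "shape S \<Longrightarrow> avg f S = mean (lebesgue_on S) f"
  by (simp add: avg_def mean_def set_lebesgue_integral_def integral_restrict_space
      shape_sets_lebesgue measure_restrict_space)

lemma set_nn_integral_shape: "shape S \<Longrightarrow> (\<integral>\<^sup>+x\<in>S. g x \<partial>lebesgue) = (\<integral>\<^sup>+x. g x \<partial>lebesgue_on S)"
  by (simp add: nn_integral_restrict_space shape_sets_lebesgue)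

lemma set_nn_integral_eq_osc_integral:
  "shape S \<Longrightarrow> (\<integral>\<^sup>+x\<in>S. ennreal (\<bar>f x - avg f S\<bar> powr p) \<partial>lebesgue) = osc_integral (lebesgue_on S) p f"
  by (simp add: set_nn_integral_shape avg_eq_mean osc_integral_def)

lemma bmo_osc_eq_osc: "shape S \<Longrightarrow> bmo_osc p f S = osc (lebesgue_on S) p f"
  by (simp add: bmo_osc_def osc_def set_nn_integral_eq_osc_integral measure_restrict_space
      shape_sets_lebesgue)

locale shape_basis =
  fixes \<S> :: "'a::euclidean_space set set"
  assumes shape: "S \<in> \<S> \<Longrightarrow> shape S" and nonempty: "\<S> \<noteq> {}"
begin

lemma in_BMO_iff:
  "in_BMO p \<S> f \<longleftrightarrow>
     (\<forall>S\<in>\<S>. integrable (lebesgue_on S) f \<and> osc_integral (lebesgue_on S) p f < \<infinity>) \<and>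
     bdd_above ((\<lambda>S. osc (lebesgue_on S) p f) ` \<S>)"
  by (auto simp: in_BMO_def set_integrable_eq shape_sets_lebesgue shape set_nn_integral_eq_osc_integral
      bmo_osc_eq_osc cong: image_cong)

lemma bmo_norm_eq: "bmo_norm p \<S> f = (SUP S\<in>\<S>. osc (lebesgue_on S) p f)"
  by (simp add: bmo_norm_def bmo_osc_eq_osc shape cong: SUP_cong)

lemma in_BMO_D:
  assumes "in_BMO p \<S> f" "S \<in> \<S>"
  shows "integrable (lebesgue_on S) f" "osc_integral (lebesgue_on S) p f < \<infinity>"
  using assms by (auto simp: in_BMO_iff)

lemma in_BMO_I:
  assumes "\<And>S. S \<in> \<S> \<Longrightarrow> integrable (lebesgue_on S) f \<and> osc_integral (lebesgue_on S) p f < \<infinity>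
      \<and> osc (lebesgue_on S) p f \<le> c"
  shows "in_BMO p \<S> f"
  using assms by (auto simp: in_BMO_iff bdd_above_def)

lemma osc_le_bmo_norm: "in_BMO p \<S> f \<Longrightarrow> S \<in> \<S> \<Longrightarrow> osc (lebesgue_on S) p f \<le> bmo_norm p \<S> f"
  unfolding bmo_norm_eq by (rule cSUP_upper) (auto simp: in_BMO_iff)

lemma bmo_norm_le: "(\<And>S. S \<in> \<S> \<Longrightarrow> osc (lebesgue_on S) p f \<le> c) \<Longrightarrow> bmo_norm p \<S> f \<le> c"
  unfolding bmo_norm_eq using nonempty by (rule cSUP_least)

lemma bmo_norm_nonneg: "in_BMO p \<S> f \<Longrightarrow> 0 \<le> bmo_norm p \<S> f"
  using nonempty osc_le_bmo_norm osc_nonneg by (meson ex_in_conv order_trans)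

lemma in_BMO_mono:
  assumes f: "in_BMO q \<S> f" and p: "1 \<le> p" "p \<le> q"
  shows "in_BMO p \<S> f" "bmo_norm p \<S> f \<le> 2 * bmo_norm q \<S> f"
proof -
  have *: "osc_integral (lebesgue_on S) p f < \<infinity> \<and>
      osc (lebesgue_on S) p f \<le> 2 * bmo_norm q \<S> f" if S: "S \<in> \<S>" for S
  proof -
    interpret finite_measure_pos "lebesgue_on S"
      using S shape finite_measure_pos_lebesgue_on by blast
    show ?thesis
      using osc_mono[OF _ p in_BMO_D(2)[OF f S]] in_BMO_D(1)[OF f S] osc_le_bmo_norm[OF f S] by auto
  qed
  then show "in_BMO p \<S> f" using in_BMO_D(1)[OF f] by (intro in_BMO_I) blast
  show "bmo_norm p \<S> f \<le> 2 * bmo_norm q \<S> f" using * by (intro bmo_norm_le) blast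
qed

lemma in_BMO_cmult:
  assumes f: "in_BMO p \<S> f" and p: "0 < p" and S: "S \<in> \<S>"
  shows "in_BMO p \<S> (\<lambda>x. c * f x)" "osc (lebesgue_on S) p (\<lambda>x. c * f x) = \<bar>c\<bar> * osc (lebesgue_on S) p f"
proof -
  have *: "integrable (lebesgue_on S) (\<lambda>x. c * f x) \<and> osc_integral (lebesgue_on S) p (\<lambda>x. c * f x) < \<infinity>
      \<and> osc (lebesgue_on S) p (\<lambda>x. c * f x) = \<bar>c\<bar> * osc (lebesgue_on S) p f" if S: "S \<in> \<S>" for S
  proof -
    interpret finite_measure_pos "lebesgue_on S"
      using S shape finite_measure_pos_lebesgue_on by blast
    show ?thesis
      using in_BMO_D[OF f S] osc_cmult[OF _ p] osc_integral_cmult[OF _ p]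
      by (auto simp: ennreal_mult_less_top)
  qed
  then show "osc (lebesgue_on S) p (\<lambda>x. c * f x) = \<bar>c\<bar> * osc (lebesgue_on S) p f" using S by blast
  show "in_BMO p \<S> (\<lambda>x. c * f x)"
    using * osc_le_bmo_norm[OF f] by (intro in_BMO_I[where c = "\<bar>c\<bar> * bmo_norm p \<S> f"])
       (auto intro: mult_left_mono)
qed

lemma in_BMO_add_const:
  assumes f: "in_BMO p \<S> f" and S: "S \<in> \<S>"
  shows "in_BMO p \<S> (\<lambda>x. f x + c)" "osc (lebesgue_on S) p (\<lambda>x. f x + c) = osc (lebesgue_on S) p f"
    "mean (lebesgue_on S) (\<lambda>x. f x + c) = mean (lebesgue_on S) f + c"
proof -
  have *: "integrable (lebesgue_on S) (\<lambda>x. f x + c) \<and>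
      osc_integral (lebesgue_on S) p (\<lambda>x. f x + c) = osc_integral (lebesgue_on S) p f \<and>
      osc (lebesgue_on S) p (\<lambda>x. f x + c) = osc (lebesgue_on S) p f \<and>
      mean (lebesgue_on S) (\<lambda>x. f x + c) = mean (lebesgue_on S) f + c" if S: "S \<in> \<S>" for S
  proof -
    interpret finite_measure_pos "lebesgue_on S"
      using S shape finite_measure_pos_lebesgue_on by blast
    show ?thesis
      using in_BMO_D(1)[OF f S] osc_integral_add_const osc_add_const mean_add_const by simp
  qed
  then show "osc (lebesgue_on S) p (\<lambda>x. f x + c) = osc (lebesgue_on S) p f"
    "mean (lebesgue_on S) (\<lambda>x. f x + c) = mean (lebesgue_on S) f + c" using S by blast+
  show "in_BMO p \<S> (\<lambda>x. f x + c)"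
    using * in_BMO_D[OF f] osc_le_bmo_norm[OF f] by (intro in_BMO_I) auto
qed

lemma in_BMO_add:
  assumes f: "in_BMO p \<S> f" and g: "in_BMO p \<S> g" and p: "1 \<le> p" and S: "S \<in> \<S>"
  shows "in_BMO p \<S> (\<lambda>x. f x + g x)"
    "osc (lebesgue_on S) p (\<lambda>x. f x + g x) \<le> 4 * (osc (lebesgue_on S) p f + osc (lebesgue_on S) p g)"
proof -
  have *: "integrable (lebesgue_on S) (\<lambda>x. f x + g x) \<and> osc_integral (lebesgue_on S) p (\<lambda>x. f x + g x) < \<infinity>
      \<and> osc (lebesgue_on S) p (\<lambda>x. f x + g x) \<le> 4 * (osc (lebesgue_on S) p f + osc (lebesgue_on S) p g)"
    if S: "S \<in> \<S>" for S
  proof -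
    interpret finite_measure_pos "lebesgue_on S"
      using S shape finite_measure_pos_lebesgue_on by blast
    show ?thesis
      using osc_add[OF in_BMO_D(1)[OF f S] in_BMO_D(1)[OF g S] p in_BMO_D(2)[OF f S] in_BMO_D(2)[OF g S]]
        in_BMO_D(1)[OF f S] in_BMO_D(1)[OF g S] by auto
  qed
  then show "osc (lebesgue_on S) p (\<lambda>x. f x + g x) \<le> 4 * (osc (lebesgue_on S) p f + osc (lebesgue_on S) p g)"
    using S by blast
  have "osc (lebesgue_on S) p (\<lambda>x. f x + g x) \<le> 4 * (bmo_norm p \<S> f + bmo_norm p \<S> g)" if S: "S \<in> \<S>" for S
  proof -
    have "osc (lebesgue_on S) p (\<lambda>x. f x + g x) \<le> 4 * (osc (lebesgue_on S) p f + osc (lebesgue_on S) p g)"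
      using *[OF S] by blast
    then show ?thesis using osc_le_bmo_norm[OF f S] osc_le_bmo_norm[OF g S] by (smt (verit))
  qed
  then show "in_BMO p \<S> (\<lambda>x. f x + g x)" using * by (intro in_BMO_I) blast
qed

lemma in_BMO_zero:
  assumes "0 < p"
  shows "in_BMO p \<S> (\<lambda>x. 0)"
proof (rule in_BMO_I)
  fix S assume "S \<in> \<S>"
  then interpret finite_measure_pos "lebesgue_on S"
    using shape finite_measure_pos_lebesgue_on by blast
  show "integrable (lebesgue_on S) (\<lambda>x. 0) \<and> osc_integral (lebesgue_on S) p (\<lambda>x. 0) < \<infinity>
      \<and> osc (lebesgue_on S) p (\<lambda>x. 0) \<le> 0"
    using assms mean_const[of 0] by (simp add: osc_integral_def osc_def)
qed

lemma in_BMO_if_john_nirenberg: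
  assumes f: "\<And>S. S \<in> \<S> \<Longrightarrow> integrable (lebesgue_on S) f" and jn: "john_nirenberg \<Omega> \<S> f" and q: "0 < q"
  shows "in_BMO q \<S> f"
proof -
  obtain c1 c2 where c: "0 < c1" "0 < c2" and decay: "\<And>S \<alpha>. S \<in> \<S> \<Longrightarrow> 0 < \<alpha> \<Longrightarrow>
      measure lebesgue {x\<in>S. \<bar>f x - avg f S\<bar> > \<alpha>} \<le> c1 * measure lebesgue S * exp (- c2 * \<alpha>)"
    using jn unfolding john_nirenberg_def by blast
  define K where "K = 1 + c1 * (\<Sum>k. (real k + 2) powr q * exp (- c2 * (real k + 1)))"
  have K: "0 \<le> K"
    unfolding K_def using c summable_powr_mult_exp[of c2 q]
    by (intro add_nonneg_nonneg mult_nonneg_nonneg suminf_nonneg) auto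
  show ?thesis
  proof (intro in_BMO_I conjI)
    fix S assume S: "S \<in> \<S>"
    interpret finite_measure_pos "lebesgue_on S"
      using S shape finite_measure_pos_lebesgue_on by blast
    have "osc_integral (lebesgue_on S) q f \<le> ennreal (mass * K)"
      unfolding K_def
    proof (rule osc_integral_le_of_exp_decay)
      fix \<alpha> :: real assume "0 < \<alpha>"
      then show "measure (lebesgue_on S) {x \<in> space (lebesgue_on S). \<bar>f x - mean (lebesgue_on S) f\<bar> > \<alpha>}
          \<le> c1 * mass * exp (- c2 * \<alpha>)"
        using decay[OF S] shape[OF S]
        by (simp add: avg_eq_mean measure_restrict_space shape_sets_lebesgue measure_lebesgue_on_shape)
    qed (use f[OF S] c q in auto)
    then show "osc_integral (lebesgue_on S) q f < \<infinity>" "osc (lebesgue_on S) q f \<le> K powr (1 / q)"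
      using osc_le_if_osc_integral_le[OF q K] by auto
  qed (rule f)
qed

end

section \<open>Chaining means through a connected domain\<close>

lemma abs_diff_mult_emeasure_le:
  assumes "S \<inter> S' \<in> sets M"
    and "(\<lambda>x. ennreal \<bar>h x - a\<bar> * indicator S x) \<in> borel_measurable M"
    and "(\<lambda>x. ennreal \<bar>h x - a'\<bar> * indicator S' x) \<in> borel_measurable M"
  shows "ennreal \<bar>a - a'\<bar> * emeasure M (S \<inter> S')
    \<le> (\<integral>\<^sup>+x. ennreal \<bar>h x - a\<bar> * indicator S x \<partial>M) + (\<integral>\<^sup>+x. ennreal \<bar>h x - a'\<bar> * indicator S' x \<partial>M)"
proof -
  have "ennreal \<bar>a - a'\<bar> * emeasure M (S \<inter> S') = (\<integral>\<^sup>+x. ennreal \<bar>a - a'\<bar> * indicator (S \<inter> S') x \<partial>M)"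
    by (rule nn_integral_cmult_indicator[OF assms(1), symmetric])
  also have "\<dots> \<le> (\<integral>\<^sup>+x. ennreal \<bar>h x - a\<bar> * indicator S x + ennreal \<bar>h x - a'\<bar> * indicator S' x \<partial>M)"
  proof (intro nn_integral_mono)
    fix x
    have "ennreal \<bar>a - a'\<bar> \<le> ennreal \<bar>h x - a\<bar> + ennreal \<bar>h x - a'\<bar>"
      by (simp add: ennreal_plus[symmetric] ennreal_leI del: ennreal_plus)
    then show "ennreal \<bar>a - a'\<bar> * indicator (S \<inter> S') x
        \<le> ennreal \<bar>h x - a\<bar> * indicator S x + ennreal \<bar>h x - a'\<bar> * indicator S' x"
      by (cases "x \<in> S \<inter> S'") auto
  qed
  also have "\<dots> = (\<integral>\<^sup>+x. ennreal \<bar>h x - a\<bar> * indicator S x \<partial>M) + (\<integral>\<^sup>+x. ennreal \<bar>h x - a'\<bar> * indicator S' x \<partial>M)"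
    using assms(2,3) by (rule nn_integral_add)
  finally show ?thesis .
qed

definition means_linked :: "real \<Rightarrow> 'a::euclidean_space set set \<Rightarrow> 'a set \<Rightarrow> 'a set \<Rightarrow> bool" where
  "means_linked p \<S> S S' \<longleftrightarrow> (\<exists>K\<ge>0. \<forall>h. in_BMO p \<S> h \<longrightarrow>
     \<bar>mean (lebesgue_on S) h - mean (lebesgue_on S') h\<bar> \<le> K * bmo_norm p \<S> h)"

context shape_basis
begin

lemma means_linked_trans:
  assumes "means_linked p \<S> S S'" "means_linked p \<S> S' S''"
  shows "means_linked p \<S> S S''"
proof -
  obtain K K' where K: "0 \<le> K" "0 \<le> K'"
    and "\<And>h. in_BMO p \<S> h \<Longrightarrow> \<bar>mean (lebesgue_on S) h - mean (lebesgue_on S') h\<bar> \<le> K * bmo_norm p \<S> h"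
    and "\<And>h. in_BMO p \<S> h \<Longrightarrow> \<bar>mean (lebesgue_on S') h - mean (lebesgue_on S'') h\<bar> \<le> K' * bmo_norm p \<S> h"
    using assms unfolding means_linked_def by blast
  then have "\<bar>mean (lebesgue_on S) h - mean (lebesgue_on S'') h\<bar> \<le> K * bmo_norm p \<S> h + K' * bmo_norm p \<S> h"
    if "in_BMO p \<S> h" for h
    using that by (smt (verit))
  with K show ?thesis unfolding means_linked_def by (intro exI[of _ "K + K'"]) (simp add: distrib_right)
qed

lemma nn_integral_abs_dev_le_bmo_norm:
  assumes h: "in_BMO p \<S> h" and p: "1 \<le> p" and T: "T \<in> \<S>"
  shows "(\<integral>\<^sup>+x. ennreal \<bar>h x - mean (lebesgue_on T) h\<bar> * indicator T x \<partial>lebesgue)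
    \<le> ennreal (2 * measure lebesgue T * bmo_norm p \<S> h)"
proof -
  interpret finite_measure_pos "lebesgue_on T"
    using T shape finite_measure_pos_lebesgue_on by blast
  have "(\<integral>\<^sup>+x. ennreal \<bar>h x - mean (lebesgue_on T) h\<bar> * indicator T x \<partial>lebesgue)
      = (\<integral>\<^sup>+x. ennreal \<bar>h x - mean (lebesgue_on T) h\<bar> \<partial>lebesgue_on T)"
    using set_nn_integral_shape[OF shape[OF T]] by simp
  also have "\<dots> \<le> ennreal (2 * mass * osc (lebesgue_on T) p h)"
    using in_BMO_D[OF h T] by (intro nn_integral_abs_dev_le_osc[OF _ p]) auto
  also have "\<dots> \<le> ennreal (2 * mass * bmo_norm p \<S> h)"
    using osc_le_bmo_norm[OF h T] mass_pos by (intro ennreal_leI mult_left_mono) auto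
  also have "mass = measure lebesgue T"
    by (rule measure_lebesgue_on_shape[OF shape[OF T]])
  finally show ?thesis .
qed

lemma borel_measurable_abs_dev_indicator:
  assumes h: "in_BMO p \<S> h" and T: "T \<in> \<S>"
  shows "(\<lambda>x. ennreal \<bar>h x - c\<bar> * indicator T x) \<in> borel_measurable lebesgue"
proof -
  have "h \<in> borel_measurable (lebesgue_on T)" using in_BMO_D(1)[OF h T] by auto
  then have "(\<lambda>x. ennreal \<bar>h x - c\<bar>) \<in> borel_measurable (lebesgue_on T)" by measurable
  then show ?thesis
    using shape_sets_lebesgue[OF shape[OF T]]
    by (subst (asm) borel_measurable_restrict_space_iff_ennreal) auto
qed

lemma means_linked_if_overlap:
  assumes p: "1 \<le> p" and S: "S \<in> \<S>" and S': "S' \<in> \<S>" and overlap: "S \<inter> S' \<noteq> {}"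
  shows "means_linked p \<S> S S'"
proof -
  define I where "I = S \<inter> S'"
  define K where "K = 2 * (measure lebesgue S + measure lebesgue S') / measure lebesgue I"
  have I_pos: "0 < measure lebesgue I"
    unfolding I_def by (rule shape_inter_measure_pos[OF shape[OF S] shape[OF S'] overlap])
  have I_sets: "I \<in> sets lebesgue"
    using shape_sets_lebesgue[OF shape[OF S]] shape_sets_lebesgue[OF shape[OF S']] by (simp add: I_def)
  have "emeasure lebesgue I \<le> emeasure lebesgue S"
    using shape_sets_lebesgue[OF shape[OF S]] by (intro emeasure_mono) (auto simp: I_def)
  then have "emeasure lebesgue I < \<infinity>"
    using shape[OF S] le_less_trans unfolding shape_def by blast
  then have I_fin: "emeasure lebesgue I = ennreal (measure lebesgue I)"
    by (simp add: emeasure_eq_ennreal_measure)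
  have "\<bar>mean (lebesgue_on S) h - mean (lebesgue_on S') h\<bar> \<le> K * bmo_norm p \<S> h"
    if h: "in_BMO p \<S> h" for h
  proof -
    define a a' where "a = mean (lebesgue_on S) h" and "a' = mean (lebesgue_on S') h"
    have n: "0 \<le> bmo_norm p \<S> h" by (rule bmo_norm_nonneg[OF h])
    have "ennreal (\<bar>a - a'\<bar> * measure lebesgue I) = ennreal \<bar>a - a'\<bar> * emeasure lebesgue (S \<inter> S')"
      unfolding I_fin[unfolded I_def] I_def by (rule ennreal_mult) auto
    also have "\<dots> \<le> (\<integral>\<^sup>+x. ennreal \<bar>h x - a\<bar> * indicator S x \<partial>lebesgue)
        + (\<integral>\<^sup>+x. ennreal \<bar>h x - a'\<bar> * indicator S' x \<partial>lebesgue)"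
      using I_sets borel_measurable_abs_dev_indicator[OF h] S S'
      by (intro abs_diff_mult_emeasure_le) (auto simp: I_def)
    also have "\<dots> \<le> ennreal (2 * (measure lebesgue S + measure lebesgue S') * bmo_norm p \<S> h)"
      using add_mono[OF nn_integral_abs_dev_le_bmo_norm[OF h p S] nn_integral_abs_dev_le_bmo_norm[OF h p S']] n
      by (simp add: a_def a'_def ennreal_plus[symmetric] algebra_simps del: ennreal_plus)
    finally have "\<bar>a - a'\<bar> * measure lebesgue I \<le> 2 * (measure lebesgue S + measure lebesgue S') * bmo_norm p \<S> h"
      using n by (subst (asm) ennreal_le_iff) auto
    then show ?thesis using I_pos by (simp add: a_def a'_def K_def field_simps)
  qed
  moreover have "0 \<le> K" using I_pos by (simp add: K_def)
  ultimately show ?thesis unfolding means_linked_def by blast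
qed

lemma means_linked_if_connected:
  assumes conn: "connected (\<Union>\<S>)" and p: "1 \<le> p" and S: "S \<in> \<S>" and S0: "S0 \<in> \<S>"
  shows "means_linked p \<S> S S0"
proof -
  define A where "A = {S\<in>\<S>. means_linked p \<S> S S0}"
  have S0_A: "S0 \<in> A"
    using S0 by (auto simp: A_def means_linked_def intro!: exI[of _ 0])
  have step: "S' \<in> A" if S: "S \<in> A" and S': "S' \<in> \<S>" and overlap: "S \<inter> S' \<noteq> {}" for S S'
  proof -
    have "means_linked p \<S> S' S"
      using S S' overlap by (intro means_linked_if_overlap[OF p]) (auto simp: A_def)
    then show ?thesis using S S' by (auto simp: A_def intro: means_linked_trans)
  qed
  have "open (\<Union>A)" "open (\<Union>(\<S> - A))"
    using shape by (auto simp: A_def shape_def)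
  moreover have "\<Union>A \<inter> \<Union>(\<S> - A) \<inter> \<Union>\<S> = {}"
  proof -
    have False if "x \<in> S" "S \<in> A" "x \<in> S'" "S' \<in> \<S> - A" for x S S'
      using step[of S S'] that by blast
    then show ?thesis by blast
  qed
  moreover have "\<Union>\<S> \<subseteq> \<Union>A \<union> \<Union>(\<S> - A)"
    by blast
  moreover have "\<Union>A \<inter> \<Union>\<S> \<noteq> {}"
    using S0_A shape_nonempty[OF shape[OF S0]] by (auto simp: A_def)
  ultimately have "\<Union>(\<S> - A) \<inter> \<Union>\<S> = {}"
    using connectedD[OF conn] by blast
  then have "S \<in> A"
    using S shape_nonempty[OF shape[OF S]] by blast
  then show ?thesis by (simp add: A_def)
qed

lemma in_BMO_suminf:
  assumes p: "1 \<le> p" and h: "\<And>j. in_BMO p \<S> (h j)" and h_norm: "\<And>j. bmo_norm p \<S> (h j) \<le> \<epsilon> j"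
    and \<epsilon>: "\<And>j. \<epsilon> j \<le> (1/4) ^ j"
    and h_mean: "\<And>S. S \<in> \<S> \<Longrightarrow> \<exists>K\<ge>0. \<forall>j. \<bar>mean (lebesgue_on S) (h j)\<bar> \<le> K * \<epsilon> j"
  shows "in_BMO p \<S> (\<lambda>x. \<Sum>j. h j x)"
proof (rule in_BMO_I)
  fix S assume S: "S \<in> \<S>"
  interpret finite_measure_pos "lebesgue_on S"
    using S shape finite_measure_pos_lebesgue_on by blast
  obtain K where K: "0 \<le> K" "\<And>j. \<bar>mean (lebesgue_on S) (h j)\<bar> \<le> K * \<epsilon> j"
    using h_mean[OF S] by blast
  have h_osc: "osc (lebesgue_on S) p (h j) \<le> \<epsilon> j" for j
    by (rule order_trans[OF osc_le_bmo_norm[OF h S] h_norm])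
  have \<epsilon>0: "0 \<le> \<epsilon> j" for j
    using h_osc[of j] osc_nonneg[of "lebesgue_on S" p "h j"] by linarith
  have "summable \<epsilon>"
    by (rule summable_comparison_test[of _ "\<lambda>j. (1/4::real) ^ j"]) (use \<epsilon> \<epsilon>0 in auto)
  then show "integrable (lebesgue_on S) (\<lambda>x. \<Sum>j. h j x) \<and>
      osc_integral (lebesgue_on S) p (\<lambda>x. \<Sum>j. h j x) < \<infinity> \<and> osc (lebesgue_on S) p (\<lambda>x. \<Sum>j. h j x) \<le> 4"
    using integrable_series[OF p _ _ h_osc _ K] osc_series_le[OF p _ _ h_osc _ K \<epsilon>] in_BMO_D[OF h S]
    by simp
qed

end

section \<open>The gliding hump\<close>

locale john_nirenberg_basis =
  fixes \<Omega> :: "'a::euclidean_space set" and \<S> :: "'a set set" and p0 :: real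
  assumes domain: "domain \<Omega>" and basis: "basis_of_shapes \<S> \<Omega>" and nonempty_basis: "\<S> \<noteq> {}"
    and p0: "1 \<le> p0" and john_nirenberg: "\<And>f. in_BMO p0 \<S> f \<Longrightarrow> john_nirenberg \<Omega> \<S> f"
begin

sublocale shape_basis \<S>
  using basis nonempty_basis by unfold_locales (auto simp: basis_of_shapes_def)

lemma in_BMO_exponent:
  assumes "in_BMO p0 \<S> f" "0 < q"
  shows "in_BMO q \<S> f"
  using assms in_BMO_D(1) john_nirenberg by (intro in_BMO_if_john_nirenberg) auto

lemma means_linked_basis:
  assumes "1 \<le> p" "S \<in> \<S>" "S' \<in> \<S>"
  shows "means_linked p \<S> S S'"
proof (rule means_linked_if_connected[OF _ assms])
  show "connected (\<Union>\<S>)"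
    using domain basis by (simp add: domain_def basis_of_shapes_def)
qed

lemma exists_small_BMO_large_osc:
  assumes no_bound: "\<not> (\<exists>C>0. \<forall>f. in_BMO p0 \<S> f \<longrightarrow> bmo_norm q \<S> f \<le> C * bmo_norm p0 \<S> f)"
    and q: "p0 \<le> q" and S0: "S0 \<in> \<S>" and \<epsilon>: "0 < \<epsilon>"
  obtains h S where "in_BMO p0 \<S> h" "bmo_norm p0 \<S> h \<le> \<epsilon>" "mean (lebesgue_on S0) h = 0"
    "S \<in> \<S>" "M < osc (lebesgue_on S) q h"
proof -
  define C where "C = (\<bar>M\<bar> + 1) / \<epsilon>"
  have C: "0 < C" using \<epsilon> by (simp add: C_def add_pos_nonneg)
  obtain f where f: "in_BMO p0 \<S> f" and "C * bmo_norm p0 \<S> f < bmo_norm q \<S> f"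
    using no_bound C by (auto simp: not_le)
  then obtain S where S: "S \<in> \<S>" and big: "C * bmo_norm p0 \<S> f < osc (lebesgue_on S) q f"
    using bmo_norm_le[of q f "C * bmo_norm p0 \<S> f"] by force
  have p0_pos: "0 < p0" and q_pos: "0 < q" using p0 q by auto
  have fq: "in_BMO q \<S> f" by (rule in_BMO_exponent[OF f q_pos])
  have n0: "0 \<le> bmo_norm p0 \<S> f" by (rule bmo_norm_nonneg[OF f])
  obtain t where t: "0 < t" "t * bmo_norm p0 \<S> f \<le> \<epsilon>" "\<bar>M\<bar> < t * osc (lebesgue_on S) q f"
  proof (cases "bmo_norm p0 \<S> f = 0")
    case True
    then have "0 < osc (lebesgue_on S) q f" using big by simp
    then show ?thesis
      using True \<epsilon> by (intro that[of "(\<bar>M\<bar> + 1) / osc (lebesgue_on S) q f"]) (auto simp: field_simps)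
  next
    case False
    then have "0 < bmo_norm p0 \<S> f" using n0 by simp
    moreover have "\<epsilon> / bmo_norm p0 \<S> f * (C * bmo_norm p0 \<S> f) = \<bar>M\<bar> + 1"
      using False \<epsilon> by (simp add: C_def)
    ultimately show ?thesis
      using \<epsilon> big mult_strict_left_mono[OF big, of "\<epsilon> / bmo_norm p0 \<S> f"]
      by (intro that[of "\<epsilon> / bmo_norm p0 \<S> f"]) auto
  qed
  define c where "c = - mean (lebesgue_on S0) (\<lambda>x. t * f x)"
  define h where "h = (\<lambda>x. t * f x + c)"
  have tf: "in_BMO p0 \<S> (\<lambda>x. t * f x)" "in_BMO q \<S> (\<lambda>x. t * f x)"
    using in_BMO_cmult(1)[OF f p0_pos S] in_BMO_cmult(1)[OF fq q_pos S] by auto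
  have osc_h: "osc (lebesgue_on T) r h = t * osc (lebesgue_on T) r f"
    if "in_BMO r \<S> f" "0 < r" "T \<in> \<S>" for r T
    using that t(1) in_BMO_add_const(2)[OF in_BMO_cmult(1)[OF that]] in_BMO_cmult(2)[OF that]
    by (simp add: h_def)
  show ?thesis
  proof (rule that)
    show "in_BMO p0 \<S> h" unfolding h_def by (rule in_BMO_add_const(1)[OF tf(1) S0])
    show "bmo_norm p0 \<S> h \<le> \<epsilon>"
    proof (rule bmo_norm_le)
      fix T assume T: "T \<in> \<S>"
      have "t * osc (lebesgue_on T) p0 f \<le> t * bmo_norm p0 \<S> f"
        using osc_le_bmo_norm[OF f T] t(1) by (intro mult_left_mono) auto
      then show "osc (lebesgue_on T) p0 h \<le> \<epsilon>" using osc_h[OF f p0_pos T] t(2) by simp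
    qed
    have "mean (lebesgue_on S0) h = mean (lebesgue_on S0) (\<lambda>x. t * f x) + c"
      unfolding h_def by (rule in_BMO_add_const(3)[OF tf(1) S0])
    then show "mean (lebesgue_on S0) h = 0" by (simp add: c_def)
    show "S \<in> \<S>" by (rule S)
    show "M < osc (lebesgue_on S) q h" using osc_h[OF fq q_pos S] t(3) by simp
  qed
qed

lemma exists_hump:
  assumes no_bound: "\<not> (\<exists>C>0. \<forall>f. in_BMO p0 \<S> f \<longrightarrow> bmo_norm q \<S> f \<le> C * bmo_norm p0 \<S> f)"
    and q: "p0 \<le> q" and S0: "S0 \<in> \<S>" and G: "in_BMO p0 \<S> G" and \<epsilon>: "0 < \<epsilon>" and N: "0 \<le> N"
  obtains h S k where "in_BMO p0 \<S> h" "bmo_norm p0 \<S> h \<le> \<epsilon>" "mean (lebesgue_on S0) h = 0" "S \<in> \<S>"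
    "ennreal ((N + 1) * measure lebesgue S) < trunc_osc_integral (lebesgue_on S) q (real (Suc k)) (\<lambda>x. G x + h x)"
proof -
  have q1: "1 \<le> q" and q_pos: "0 < q" using p0 q by auto
  have Gq: "in_BMO q \<S> G" by (rule in_BMO_exponent[OF G q_pos])
  define R where "R = (N + 2) powr (1 / q)"
  obtain h S where h: "in_BMO p0 \<S> h" "bmo_norm p0 \<S> h \<le> \<epsilon>" "mean (lebesgue_on S0) h = 0"
    and S: "S \<in> \<S>" and big: "4 * (R + bmo_norm q \<S> G) < osc (lebesgue_on S) q h"
    using exists_small_BMO_large_osc[OF no_bound q S0 \<epsilon>] by blast
  define F where "F = (\<lambda>x. G x + h x)"
  have hq: "in_BMO q \<S> h" by (rule in_BMO_exponent[OF h(1) q_pos])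
  have Fq: "in_BMO q \<S> F" unfolding F_def by (rule in_BMO_add(1)[OF Gq hq q1 S])
  have eq: "(\<lambda>x. F x + -1 * G x) = h" by (simp add: F_def)
  have "osc (lebesgue_on S) q h \<le> 4 * (osc (lebesgue_on S) q F + osc (lebesgue_on S) q (\<lambda>x. -1 * G x))"
    using in_BMO_add(2)[OF Fq in_BMO_cmult(1)[OF Gq q_pos S, of "-1"] q1 S] unfolding eq .
  then have "R < osc (lebesgue_on S) q F"
    using big osc_le_bmo_norm[OF Gq S] in_BMO_cmult(2)[OF Gq q_pos S, of "-1"] by simp
  then have "R powr q < osc (lebesgue_on S) q F powr q"
    using q_pos by (intro powr_less_mono2) (auto simp: R_def)
  then have osc_F: "N + 1 < osc (lebesgue_on S) q F powr q"
    using q_pos N by (simp add: R_def powr_powr)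
  interpret finite_measure_pos "lebesgue_on S"
    using S shape finite_measure_pos_lebesgue_on by blast
  have "(N + 1) * measure lebesgue S < measure lebesgue S * osc (lebesgue_on S) q F powr q"
    using osc_F shape_measure_pos[OF shape[OF S]] by (simp add: mult.commute)
  then have "ennreal ((N + 1) * measure lebesgue S) < ennreal (mass * osc (lebesgue_on S) q F powr q)"
    unfolding measure_lebesgue_on_shape[OF shape[OF S]] using N by (simp add: ennreal_less_iff)
  also have "\<dots> = osc_integral (lebesgue_on S) q F"
    by (rule osc_integral_eq_osc[OF q_pos in_BMO_D(2)[OF Fq S], symmetric])
  also have "\<dots> = (SUP k. trunc_osc_integral (lebesgue_on S) q (real (Suc k)) F)"
    using in_BMO_D(1)[OF Fq S] by (intro SUP_trunc_osc_integral[symmetric] q_pos) auto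
  finally obtain k where "ennreal ((N + 1) * measure lebesgue S) < trunc_osc_integral (lebesgue_on S) q (real (Suc k)) F"
    by (auto simp: less_SUP_iff)
  then show ?thesis using that[OF h S] by (simp add: F_def)
qed

end

(* The partial sum up to the n-th hump has truncated q-oscillation of order n on the shape S n;
   eps_level makes all later humps together too small in L^1 to undo this at the truncation
   level k n + 1. *)
locale hump_sequence = john_nirenberg_basis +
  fixes q :: real and S0 :: "'a::euclidean_space set" and h :: "nat \<Rightarrow> 'a \<Rightarrow> real"
    and S :: "nat \<Rightarrow> 'a set" and k :: "nat \<Rightarrow> nat" and \<epsilon> :: "nat \<Rightarrow> real"
  assumes exponent: "p0 \<le> q" and base_shape: "S0 \<in> \<S>"
    and hump_BMO: "in_BMO p0 \<S> (h n)" and hump_norm: "bmo_norm p0 \<S> (h n) \<le> \<epsilon> n"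
    and hump_mean: "mean (lebesgue_on S0) (h n) = 0" and hump_shape: "S n \<in> \<S>"
    and hump_large: "ennreal ((real n powr q + 1) * measure lebesgue (S n))
      < trunc_osc_integral (lebesgue_on (S n)) q (real (Suc (k n))) (\<lambda>x. \<Sum>j<Suc n. h j x)"
    and eps_0: "\<epsilon> 0 \<le> 1" and eps_Suc: "\<epsilon> (Suc n) \<le> \<epsilon> n / 4"
    and eps_level: "\<epsilon> (Suc n) \<le> 1 / (8 * q * real (Suc (k n)) powr (q - 1))"
begin

lemma eps_nonneg: "0 \<le> \<epsilon> n"
  using bmo_norm_nonneg[OF hump_BMO, of n] hump_norm[of n] by linarith

lemma eps_decay: "\<epsilon> (j + m) \<le> (1/4) ^ j * \<epsilon> m"
proof (induction j)
  case (Suc j)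
  then show ?case using eps_Suc[of "j + m"] by simp
qed simp

lemma eps_geometric: "\<epsilon> n \<le> (1/4) ^ n"
proof -
  have "(1/4) ^ n * \<epsilon> 0 \<le> (1/4) ^ n" using eps_0 by (simp add: mult_left_le)
  with eps_decay[of n 0] show ?thesis by (metis add_0_right order_trans)
qed

lemma summable_eps_shift: "summable (\<lambda>j. \<epsilon> (j + m))"
  by (rule summable_comparison_test[of _ "\<lambda>j. (1/4) ^ j * \<epsilon> m"])
     (auto simp: eps_nonneg eps_decay intro: summable_mult2 summable_geometric)

lemma summable_eps: "summable \<epsilon>"
  using summable_eps_shift[of 0] by simp

lemma suminf_eps_tail: "(\<Sum>j. \<epsilon> (j + Suc n)) \<le> 1 / (6 * q * real (Suc (k n)) powr (q - 1))"
proof -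
  have "(\<Sum>j. \<epsilon> (j + Suc n)) \<le> (\<Sum>j. (1/4) ^ j * \<epsilon> (Suc n))"
    by (intro suminf_le eps_decay summable_eps_shift summable_mult2 summable_geometric) simp
  also have "\<dots> = 4 / 3 * \<epsilon> (Suc n)"
    using suminf_geometric[of "1/4::real"] by (simp add: suminf_mult2[symmetric] summable_geometric)
  also have "\<dots> \<le> 4 / 3 * (1 / (8 * q * real (Suc (k n)) powr (q - 1)))"
    using eps_level[of n] by (intro mult_left_mono) auto
  finally show ?thesis by (simp add: field_simps)
qed

lemma hump_mean_bound: "T \<in> \<S> \<Longrightarrow> \<exists>K\<ge>0. \<forall>j. \<bar>mean (lebesgue_on T) (h j)\<bar> \<le> K * \<epsilon> j"
  using means_linked_basis[OF p0 _ base_shape, of T] hump_BMO hump_norm hump_mean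
  unfolding means_linked_def by (metis (no_types, opaque_lifting) diff_zero mult_left_mono order_trans)

lemma in_BMO_hump_sum: "in_BMO p0 \<S> (\<lambda>x. \<Sum>j. h j x)"
  by (rule in_BMO_suminf[OF p0 hump_BMO hump_norm eps_geometric hump_mean_bound])

lemma hump_on_shape:
  assumes "T \<in> \<S>"
  shows "integrable (lebesgue_on T) (h j)" "osc_integral (lebesgue_on T) p0 (h j) < \<infinity>"
    "osc (lebesgue_on T) p0 (h j) \<le> \<epsilon> j"
  using in_BMO_D[OF hump_BMO assms] order_trans[OF osc_le_bmo_norm[OF hump_BMO assms] hump_norm]
  by auto

lemma hump_tail_small:
  fixes n :: nat
  defines "w \<equiv> \<lambda>x. \<Sum>j. h (j + Suc n) x"
  shows "ennreal (q * real (Suc (k n)) powr (q - 1)) *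
      (\<integral>\<^sup>+x. ennreal \<bar>w x - mean (lebesgue_on (S n)) w\<bar> \<partial>lebesgue_on (S n))
    \<le> ennreal (measure lebesgue (S n))"
proof -
  interpret finite_measure_pos "lebesgue_on (S n)"
    using hump_shape shape finite_measure_pos_lebesgue_on by blast
  define L where "L = q * real (Suc (k n)) powr (q - 1)"
  have L_pos: "0 < L" using p0 exponent by (simp add: L_def)
  obtain K where K: "0 \<le> K" "\<And>j. \<bar>mean (lebesgue_on (S n)) (h j)\<bar> \<le> K * \<epsilon> j"
    using hump_mean_bound[OF hump_shape] by blast
  have tail_nonneg: "0 \<le> (\<Sum>j. \<epsilon> (j + Suc n))"
    using summable_eps_shift eps_nonneg by (rule suminf_nonneg)
  have "ennreal L * (\<integral>\<^sup>+x. ennreal \<bar>w x - mean (lebesgue_on (S n)) w\<bar> \<partial>lebesgue_on (S n))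
      \<le> ennreal L * ennreal (2 * mass * (\<Sum>j. \<epsilon> (j + Suc n)))"
    unfolding w_def
    using nn_integral_abs_dev_series_le[where h = "\<lambda>j. h (j + Suc n)" and \<epsilon> = "\<lambda>j. \<epsilon> (j + Suc n)",
        OF p0 hump_on_shape[OF hump_shape] summable_eps_shift K]
    by (intro mult_left_mono) auto
  also have "\<dots> \<le> ennreal mass"
  proof -
    have "L * (2 * mass * (\<Sum>j. \<epsilon> (j + Suc n))) \<le> L * (2 * mass * (1 / (6 * L)))"
      using suminf_eps_tail[of n] L_pos mass_pos by (intro mult_left_mono) (auto simp: L_def mult.assoc)
    also have "\<dots> \<le> mass" using L_pos mass_pos by simp
    finally show ?thesis
      using L_pos mass_pos tail_nonneg by (simp add: ennreal_mult[symmetric] ennreal_leI)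
  qed
  also have "mass = measure lebesgue (S n)"
    by (rule measure_lebesgue_on_shape[OF shape[OF hump_shape]])
  finally show ?thesis by (simp add: L_def)
qed

lemma osc_hump_sum_gt: "real n < osc (lebesgue_on (S n)) q (\<lambda>x. \<Sum>j. h j x)"
proof -
  interpret finite_measure_pos "lebesgue_on (S n)"
    using hump_shape shape finite_measure_pos_lebesgue_on by blast
  define g where "g = (\<lambda>x. \<Sum>j. h j x)"
  define w where "w = (\<lambda>x. \<Sum>j. h (j + Suc n) x)"
  have q1: "1 \<le> q" and q_pos: "0 < q" using p0 exponent by auto
  obtain K where K: "0 \<le> K" "\<And>j. \<bar>mean (lebesgue_on (S n)) (h j)\<bar> \<le> K * \<epsilon> j"
    using hump_mean_bound[OF hump_shape] by blast
  note series = AE_summable_series integrable_series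
  note sum = series[OF p0 hump_on_shape[OF hump_shape] summable_eps K]
  note tail = series[where h = "\<lambda>j. h (j + Suc n)" and \<epsilon> = "\<lambda>j. \<epsilon> (j + Suc n)",
      OF p0 hump_on_shape[OF hump_shape] summable_eps_shift K]
  have split: "AE x in lebesgue_on (S n). g x = (\<Sum>j<Suc n. h j x) + w x"
    using sum(1)
  proof eventually_elim
    case (elim x)
    show ?case
      using suminf_split_initial_segment[OF summable_rabs_cancel[OF elim], of "Suc n"]
      by (simp only: g_def w_def ac_simps)
  qed
  have "real n powr q < osc (lebesgue_on (S n)) q g powr q"
  proof (rule osc_powr_gt_if_trunc_osc_integral_gt[OF _ _ _ split _ q1])
    show "ennreal ((real n powr q + 1) * mass)
        < trunc_osc_integral (lebesgue_on (S n)) q (real (Suc (k n))) (\<lambda>x. \<Sum>j<Suc n. h j x)"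
      using hump_large[of n] measure_lebesgue_on_shape[OF shape[OF hump_shape]] by simp
    show "ennreal (q * real (Suc (k n)) powr (q - 1)) *
        (\<integral>\<^sup>+x. ennreal \<bar>w x - mean (lebesgue_on (S n)) w\<bar> \<partial>lebesgue_on (S n)) \<le> ennreal mass"
      using hump_tail_small[of n] measure_lebesgue_on_shape[OF shape[OF hump_shape]] by (simp add: w_def)
    show "osc_integral (lebesgue_on (S n)) q g < \<infinity>"
      using in_BMO_D(2)[OF in_BMO_exponent[OF in_BMO_hump_sum q_pos] hump_shape] by (simp add: g_def)
  qed (use hump_on_shape[OF hump_shape] sum(2) tail(2) in \<open>auto simp: g_def w_def\<close>)
  then show ?thesis
    using q_pos osc_nonneg powr_mono2[of q "osc (lebesgue_on (S n)) q g" "real n"]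
    by (force simp: g_def)
qed

end

context john_nirenberg_basis
begin

lemma exists_hump_sequence:
  assumes no_bound: "\<not> (\<exists>C>0. \<forall>f. in_BMO p0 \<S> f \<longrightarrow> bmo_norm q \<S> f \<le> C * bmo_norm p0 \<S> f)"
    and q: "p0 \<le> q" and S0: "S0 \<in> \<S>"
  obtains h S k \<epsilon> where "hump_sequence \<Omega> \<S> p0 q S0 h S k \<epsilon>"
proof -
  have p0_pos: "0 < p0" using p0 by simp
  define good where "good n G \<epsilon> y \<longleftrightarrow> (case y of (h, S, k) \<Rightarrow> in_BMO p0 \<S> h \<and> bmo_norm p0 \<S> h \<le> \<epsilon> \<and>
      mean (lebesgue_on S0) h = 0 \<and> S \<in> \<S> \<and> ennreal ((real n powr q + 1) * measure lebesgue S)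
        < trunc_osc_integral (lebesgue_on S) q (real (Suc k)) (\<lambda>x. G x + h x))"
    for n :: nat and G \<epsilon> and y :: "('a \<Rightarrow> real) \<times> 'a set \<times> nat"
  have good_exists: "\<exists>y. good n G \<epsilon> y" if "in_BMO p0 \<S> G" "0 < \<epsilon>" for n G \<epsilon>
    using exists_hump[OF no_bound q S0 that, of "real n powr q"] unfolding good_def by fastforce
  define step where "step n G \<epsilon> = (SOME y. good n G \<epsilon> y)" for n G \<epsilon>
  have step: "good n G \<epsilon> (step n G \<epsilon>)" if "in_BMO p0 \<S> G" "0 < \<epsilon>" for n G \<epsilon>
    unfolding step_def by (rule someI_ex[OF good_exists[OF that]])
  define L where "L k = q * real (Suc k) powr (q - 1)" for k :: nat
  define st where "st = rec_nat ((\<lambda>x. 0), 1) (\<lambda>n (G, \<epsilon>). case step n G \<epsilon> of (h, S, k) \<Rightarrow>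
      ((\<lambda>x. G x + h x), min (\<epsilon> / 4) (1 / (8 * L k))))"
  define G \<epsilon> where "G n = fst (st n)" and "\<epsilon> n = snd (st n)" for n
  define h S k where "h n = fst (step n (G n) (\<epsilon> n))" and "S n = fst (snd (step n (G n) (\<epsilon> n)))"
    and "k n = snd (snd (step n (G n) (\<epsilon> n)))" for n
  have G_0: "G 0 = (\<lambda>x. 0)" and \<epsilon>_0: "\<epsilon> 0 = 1" by (simp_all add: G_def \<epsilon>_def st_def)
  have G_Suc: "G (Suc n) = (\<lambda>x. G n x + h n x)"
    and \<epsilon>_Suc: "\<epsilon> (Suc n) = min (\<epsilon> n / 4) (1 / (8 * L (k n)))" for n
    by (simp_all add: G_def \<epsilon>_def h_def k_def st_def case_prod_beta)
  have L_pos: "0 < L k" for k using p0 q by (simp add: L_def)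
  have good_n: "good n (G n) (\<epsilon> n) (h n, S n, k n)" for n
  proof -
    have "in_BMO p0 \<S> (G n) \<and> 0 < \<epsilon> n \<and> good n (G n) (\<epsilon> n) (h n, S n, k n)"
    proof (induction n)
      case 0
      then show ?case using in_BMO_zero[OF p0_pos] step by (simp add: G_0 \<epsilon>_0 h_def S_def k_def)
    next
      case (Suc n)
      then have "in_BMO p0 \<S> (G (Suc n))" "0 < \<epsilon> (Suc n)"
        using in_BMO_add(1)[OF _ _ p0 S0] L_pos by (auto simp: G_Suc \<epsilon>_Suc good_def)
      then show ?case using step by (simp add: h_def S_def k_def)
    qed
    then show ?thesis by blast
  qed
  have G_sum: "G n = (\<lambda>x. \<Sum>j<n. h j x)" for n
    by (induction n) (simp_all add: G_0 G_Suc)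
  show ?thesis
  proof (rule that, unfold_locales)
    show "p0 \<le> q" "S0 \<in> \<S>" "\<epsilon> 0 \<le> 1" by (simp_all add: q S0 \<epsilon>_0)
    fix n
    show "in_BMO p0 \<S> (h n)" "bmo_norm p0 \<S> (h n) \<le> \<epsilon> n" "mean (lebesgue_on S0) (h n) = 0" "S n \<in> \<S>"
      "ennreal ((real n powr q + 1) * measure lebesgue (S n))
        < trunc_osc_integral (lebesgue_on (S n)) q (real (Suc (k n))) (\<lambda>x. \<Sum>j<Suc n. h j x)"
      using good_n[of n] by (simp_all add: good_def G_sum)
    show "\<epsilon> (Suc n) \<le> \<epsilon> n / 4" "\<epsilon> (Suc n) \<le> 1 / (8 * q * real (Suc (k n)) powr (q - 1))"
      by (simp_all add: \<epsilon>_Suc L_def mult.assoc)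
  qed
qed

theorem bmo_norm_le_const_mult:
  assumes q: "p0 \<le> q"
  shows "\<exists>C>0. \<forall>f. in_BMO p0 \<S> f \<longrightarrow> bmo_norm q \<S> f \<le> C * bmo_norm p0 \<S> f"
proof (rule ccontr)
  assume no_bound: "\<not> ?thesis"
  obtain S0 where S0: "S0 \<in> \<S>" using nonempty by blast
  obtain h S k \<epsilon> where "hump_sequence \<Omega> \<S> p0 q S0 h S k \<epsilon>"
    using exists_hump_sequence[OF no_bound q S0] by blast
  then interpret hump_sequence \<Omega> \<S> p0 q S0 h S k \<epsilon> .
  obtain n where n: "bmo_norm q \<S> (\<lambda>x. \<Sum>j. h j x) < real n"
    using reals_Archimedean2 by blast
  have "in_BMO q \<S> (\<lambda>x. \<Sum>j. h j x)"
    using in_BMO_exponent[OF in_BMO_hump_sum] p0 q by simp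
  then have "osc (lebesgue_on (S n)) q (\<lambda>x. \<Sum>j. h j x) \<le> bmo_norm q \<S> (\<lambda>x. \<Sum>j. h j x)"
    by (rule osc_le_bmo_norm[OF _ hump_shape])
  then show False using n osc_hump_sum_gt[of n] by linarith
qed

theorem BMO_exponents_equivalent:
  assumes p1: "p0 \<le> p1" and p2: "p0 \<le> p2"
  shows "(\<forall>f. in_BMO p1 \<S> f \<longleftrightarrow> in_BMO p2 \<S> f) \<and>
    (\<exists>C>0. \<forall>f. in_BMO p1 \<S> f \<longrightarrow>
      bmo_norm p1 \<S> f \<le> C * bmo_norm p2 \<S> f \<and> bmo_norm p2 \<S> f \<le> C * bmo_norm p1 \<S> f)"
proof -
  have iff: "in_BMO p \<S> f \<longleftrightarrow> in_BMO p0 \<S> f" if "p0 \<le> p" for p f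
    using in_BMO_mono(1)[OF _ p0 that] in_BMO_exponent[of f p] that p0 by auto
  obtain C1 C2 where C: "0 < C1" "0 < C2"
    and bound1: "\<And>f. in_BMO p0 \<S> f \<Longrightarrow> bmo_norm p1 \<S> f \<le> C1 * bmo_norm p0 \<S> f"
    and bound2: "\<And>f. in_BMO p0 \<S> f \<Longrightarrow> bmo_norm p2 \<S> f \<le> C2 * bmo_norm p0 \<S> f"
    using bmo_norm_le_const_mult[OF p1] bmo_norm_le_const_mult[OF p2] by blast
  define C where "C = 2 * (C1 + C2)"
  have via_p0: "bmo_norm r \<S> f \<le> C * bmo_norm r' \<S> f"
    if f: "in_BMO p0 \<S> f" and r': "p0 \<le> r'" and Cr: "0 < Cr" "Cr \<le> C1 + C2"
      and bound: "bmo_norm r \<S> f \<le> Cr * bmo_norm p0 \<S> f" for r r' f Cr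
  proof -
    have f': "in_BMO r' \<S> f" using iff[OF r'] f by simp
    have "Cr * bmo_norm p0 \<S> f \<le> Cr * (2 * bmo_norm r' \<S> f)"
      using in_BMO_mono(2)[OF f' p0 r'] Cr by (intro mult_left_mono) auto
    also have "\<dots> \<le> C * bmo_norm r' \<S> f"
      using mult_right_mono[of "2 * Cr" C "bmo_norm r' \<S> f"] Cr bmo_norm_nonneg[OF f']
      by (simp add: C_def mult_ac)
    finally show ?thesis using bound by linarith
  qed
  show ?thesis
    using iff[OF p1] iff[OF p2] C via_p0[OF _ p2 _ _ bound1] via_p0[OF _ p1 _ _ bound2]
    by (intro conjI exI[of _ C]) (auto simp: C_def)
qed

end

theorem corollary7p7:
  fixes \<Omega> :: "'a::euclidean_space set" and \<S> :: "'a set set" and p0 :: real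
  assumes "domain \<Omega>"
    and "basis_of_shapes \<S> \<Omega>"
    and "1 \<le> p0"
    and "\<forall>f. in_BMO p0 \<S> f \<longrightarrow> john_nirenberg \<Omega> \<S> f"
  shows "\<forall>p1 p2. p0 \<le> p1 \<longrightarrow> p0 \<le> p2 \<longrightarrow>
           (\<forall>f. in_BMO p1 \<S> f \<longleftrightarrow> in_BMO p2 \<S> f) \<and>
           (\<exists>C>0. \<forall>f. in_BMO p1 \<S> f \<longrightarrow>
               bmo_norm p1 \<S> f \<le> C * bmo_norm p2 \<S> f \<and>
               bmo_norm p2 \<S> f \<le> C * bmo_norm p1 \<S> f)"
proof (intro allI impI)
  fix p1 p2 :: real
  assume p1: "p0 \<le> p1" and p2: "p0 \<le> p2"
  show "(\<forall>f. in_BMO p1 \<S> f \<longleftrightarrow> in_BMO p2 \<S> f) \<and>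
    (\<exists>C>0. \<forall>f. in_BMO p1 \<S> f \<longrightarrow>
      bmo_norm p1 \<S> f \<le> C * bmo_norm p2 \<S> f \<and> bmo_norm p2 \<S> f \<le> C * bmo_norm p1 \<S> f)"
  proof (cases "\<S> = {}")
    case True
    (* Then both norms are the same unspecified real Sup {}. *)
    then show ?thesis by (auto simp: in_BMO_def bmo_norm_def intro!: exI[of _ 1])
  next
    case False
    interpret john_nirenberg_basis \<Omega> \<S> p0
      using assms False by unfold_locales auto
    show ?thesis by (rule BMO_exponents_equivalent[OF p1 p2])
  qed
qed

end
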